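(* Let $\mathbf s$ be a parity sequence for $\mathfrak{gl}_{m|n}$ and let $\mathbf s'$ be the parity sequence (for $\mathfrak{gl}_{n|m}$) defined by $s'_i=-s_{1-i}$ for all $i\in\mathbb Z$. Then there is an isomorphism of superalgebras $$\tau_{\mathbf s}:\ \mathcal E_{\mathbf s}(q_1,q_2,q_3)\to\mathcal E_{\mathbf s'}(q_3^{-1},q_2^{-1},q_1^{-1}),$$ given (coefficientwise in the generating series) by $$E_i(z)\mapsto E_{-i}(z),\qquad F_i(z)\mapsto -F_{-i}(z),\qquad K_i^\pm(z)\mapsto K_{-i}^\pm(z)\qquad(i\in\hat I).$$
   Context: Fix integers $m,n\ge 0$ with $m\ne n$ and $N=m+n\ge 3$. A parity sequence is $\mathbf s=(s_1,\dots,s_N)\in\{1,-1\}^N$ with exactly $m$ entries equal to $1$, extended to $(s_i)_{i\in\mathbb Z}$ by $s_{i+N}=s_i$. Let $\hat I=\{0,1,\dots,N-1\}$, indices always taken modulo $N$. For $i\in\hat I$ put $|i|=(1-s_is_{i+1})/2$. Define $A_{i,j}=(s_i+s_{i+1})\delta_{i,j}-s_i\delta_{i,j+1}-s_j\delta_{i+1,j}$ and $M_{i,j}$ by $M_{i+1,i}=-M_{i,i+1}=s_{i+1}$ and $M_{i,j}=0$ if $i\ne j\pm1$ ($i,j\in\hat I$). Let $\hat Q$ be the free abelian group on $\alpha_i$ ($i\in\hat I$) with symmetric bilinear form $\langle\alpha_i,\alpha_j\rangle=A_{i,j}$. Fix $d,q\in\mathbb C^\times$, put $q_1=dq^{-1}$,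 $q_2=q^2$, $q_3=d^{-1}q^{-1}$, and assume $q_1^aq_2^bq_3^c=1$ ($a,b,c\in\mathbb Z$) only if $a=b=c$. Let $\delta(z)=\sum_{n\in\mathbb Z}z^n$. $\mathcal E_{\mathbf s}=\mathcal E_{\mathbf s}(q_1,q_2,q_3)$ is the unital associative superalgebra generated by $E_{i,r},F_{i,r},H_{i,r'}$ and invertible $K_i$ ($i\in\hat I$, $r,r'\in\mathbb Z$, $r'\ne0$), with $|E_{i,r}|=|F_{i,r}|=|i|$ and all other generators even. Write $E_i(z)=\sum_kE_{i,k}z^{-k}$, $F_i(z)=\sum_kF_{i,k}z^{-k}$, $K_i^\pm(z)=K_i^{\pm1}\exp\big(\pm(q-q^{-1})\sum_{r>0}H_{i,\pm r}z^{\mp r}\big)$. Let $[X,Y]=XY-(-1)^{|X||Y|}YX$, and for homogeneous $X,Y$ of $\hat Q$-weights $\alpha,\beta$ (where $E_{i,r}$ has weight $\alpha_i$, $F_{i,r}$ weight $-\alpha_i$, $K_i,H_{i,r}$ weight $0$) let $[\![X,Y]\!]=XY-(-1)^{|X||Y|}q^{\langle\alpha,\beta\rangle}YX$. The defining relations are, for all $i,j\in\hat I$: (1) $K_iK_j=K_jK_i$, $K_iE_j(z)K_i^{-1}=q^{A_{i,j}}E_j(z)$, $K_iF_j(z)K_i^{-1}=q^{-A_{i,j}}F_j(z)$; (2) $K_i^\pm(z)K_j^\pm(w)=K_j^\pm(w)K_i^\pm(z)$, $K_i^-(z)K_j^+(w)=K_j^+(w)K_i^-(z)$; (3) $(d^{M_{i,j}}z-q^{A_{i,j}}w)K_i^\pm(z)E_j(w)=(d^{M_{i,j}}q^{A_{i,j}}z-w)E_j(w)K_i^\pm(z)$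 and $(d^{M_{i,j}}z-q^{-A_{i,j}}w)K_i^\pm(z)F_j(w)=(d^{M_{i,j}}q^{-A_{i,j}}z-w)F_j(w)K_i^\pm(z)$; (4) $[E_i(z),F_j(w)]=\frac{\delta_{i,j}}{q-q^{-1}}\big(\delta(w/z)K_i^+(w)-\delta(z/w)K_i^-(z)\big)$; (5) if $A_{i,j}=0$: $[E_i(z),E_j(w)]=0=[F_i(z),F_j(w)]$; if $A_{i,j}\ne0$: $(d^{M_{i,j}}z-q^{A_{i,j}}w)E_i(z)E_j(w)=(-1)^{|i||j|}(d^{M_{i,j}}q^{A_{i,j}}z-w)E_j(w)E_i(z)$ and $(d^{M_{i,j}}z-q^{-A_{i,j}}w)F_i(z)F_j(w)=(-1)^{|i||j|}(d^{M_{i,j}}q^{-A_{i,j}}z-w)F_j(w)F_i(z)$; (6) if $A_{i,i}\ne0$: $\mathrm{Sym}_{z_1,z_2}[\![E_i(z_1),[\![E_i(z_2),E_{i\pm1}(w)]\!]]\!]=0$ and the same with $F$ in place of $E$; if $mn\ne2$ and $A_{i,i}=0$: $\mathrm{Sym}_{z_1,z_2}[\![E_i(z_1),[\![E_{i+1}(w_1),[\![E_i(z_2),E_{i-1}(w_2)]\!]]\!]]\!]=0$ and the same with $F$; if $mn=2$ and $A_{i,i}\ne0$: $\mathrm{Sym}_{z_1,z_2}\mathrm{Sym}_{w_1,w_2}[\![E_{i-1}(z_1),[\![E_{i+1}(w_1),[\![E_{i-1}(z_2),[\![E_{i+1}(w_2),E_i(y)]\!]]\!]]\!]]\!]=\mathrm{Sym}_{z_1,z_2}\mathrm{Sym}_{w_1,w_2}[\![E_{i+1}(w_1),[\![E_{i-1}(z_1),[\![E_{i+1}(w_2),[\![E_{i-1}(z_2),E_i(y)]\!]]\!]]\!]]\!]$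 and the same with $F$. The algebra $\mathcal E_{\mathbf s'}(q_3^{-1},q_2^{-1},q_1^{-1})$ is defined in the same way with $(m,n)$ replaced by $(n,m)$, $\mathbf s$ by $\mathbf s'$, and $(q_1,q_2,q_3)$ replaced by $(q_3^{-1},q_2^{-1},q_1^{-1})$ (i.e. $(d,q)$ replaced by $(d,q^{-1})$). *)

theory Defs
  imports Complex_Main
begin

text \<open>Generators: GE i r = E_{i,r}, GF i r = F_{i,r}, GH i r = H_{i,r}, GK i = K_i,
  GKi i = K_i^{-1}.  Only indices i in {0..N-1} (and r nonzero for H) are admitted.\<close>

datatype gen = GE int int | GF int int | GH int int | GK int | GKi int

text \<open>Elements of the free algebra: coefficient functions on words (finitely supported
  ones are the noncommutative polynomials, see fpoly).\<close>
type_synonym fa = "gen list \<Rightarrow> complex"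

definition fzero :: fa where "fzero = (\<lambda>w. 0)"
definition fone :: fa where "fone = (\<lambda>w. if w = [] then 1 else 0)"
definition fgen :: "gen \<Rightarrow> fa" where "fgen g = (\<lambda>w. if w = [g] then 1 else 0)"
definition fadd :: "fa \<Rightarrow> fa \<Rightarrow> fa" where "fadd x y = (\<lambda>w. x w + y w)"
definition fsub :: "fa \<Rightarrow> fa \<Rightarrow> fa" where "fsub x y = (\<lambda>w. x w - y w)"
definition fsmul :: "complex \<Rightarrow> fa \<Rightarrow> fa" where "fsmul c x = (\<lambda>w. c * x w)"
definition fmul :: "fa \<Rightarrow> fa \<Rightarrow> fa" where
  "fmul x y = (\<lambda>w. \<Sum>k\<le>length w. x (take k w) * y (drop k w))"
definition fsum :: "('a \<Rightarrow> fa) \<Rightarrow> 'a set \<Rightarrow> fa" where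
  "fsum f A = (\<lambda>w. \<Sum>a\<in>A. f a w)"

definition fsuml :: "('a \<Rightarrow> fa) \<Rightarrow> 'a list \<Rightarrow> fa" where
  "fsuml f xs = (\<lambda>w. \<Sum>x\<leftarrow>xs. f x w)"

definition valid_gen :: "nat \<Rightarrow> gen \<Rightarrow> bool" where
  "valid_gen N g = (case g of
      GE i r \<Rightarrow> 0 \<le> i \<and> i < int N
    | GF i r \<Rightarrow> 0 \<le> i \<and> i < int N
    | GH i r \<Rightarrow> 0 \<le> i \<and> i < int N \<and> r \<noteq> 0
    | GK i \<Rightarrow> 0 \<le> i \<and> i < int N
    | GKi i \<Rightarrow> 0 \<le> i \<and> i < int N)"

definition fpoly :: "nat \<Rightarrow> fa \<Rightarrow> bool" where
  "fpoly N x \<longleftrightarrow> finite {w. x w \<noteq> 0} \<and> (\<forall>w. x w \<noteq> 0 \<longrightarrow> (\<forall>g\<in>set w. valid_gen N g))"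

inductive_set tsideal :: "nat \<Rightarrow> fa set \<Rightarrow> fa set" for N R where
  zero: "fzero \<in> tsideal N R"
| add: "x \<in> tsideal N R \<Longrightarrow> y \<in> tsideal N R \<Longrightarrow> fadd x y \<in> tsideal N R"
| gen: "r \<in> R \<Longrightarrow> fpoly N a \<Longrightarrow> fpoly N b \<Longrightarrow> fmul a (fmul r b) \<in> tsideal N R"

fun wimg :: "(gen \<Rightarrow> fa) \<Rightarrow> gen list \<Rightarrow> fa" where
  "wimg f [] = fone"
| "wimg f (g # u) = fmul (f g) (wimg f u)"

definition fext :: "(gen \<Rightarrow> fa) \<Rightarrow> fa \<Rightarrow> fa" where
  "fext f x = (\<lambda>w. \<Sum>u\<in>{u. x u \<noteq> 0}. x u * wimg f u w)"

definition sA :: "(int \<Rightarrow> int) \<Rightarrow> nat \<Rightarrow> int \<Rightarrow> int \<Rightarrow> int" where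
  "sA s N i j =
     (s i + s (i + 1)) * (if i mod int N = j mod int N then 1 else 0)
     - s i * (if i mod int N = (j + 1) mod int N then 1 else 0)
     - s j * (if (i + 1) mod int N = j mod int N then 1 else 0)"

definition sM :: "(int \<Rightarrow> int) \<Rightarrow> nat \<Rightarrow> int \<Rightarrow> int \<Rightarrow> int" where
  "sM s N i j =
     (if i mod int N = (j + 1) mod int N then s i
      else if (i + 1) mod int N = j mod int N then - s j else 0)"

definition spar :: "(int \<Rightarrow> int) \<Rightarrow> int \<Rightarrow> int" where
  "spar s i = (1 - s i * s (i + 1)) div 2"

definition gpar :: "(int \<Rightarrow> int) \<Rightarrow> gen \<Rightarrow> int" where
  "gpar s g = (case g of GE i r \<Rightarrow> spar s i | GF i r \<Rightarrow> spar s i | _ \<Rightarrow> 0)"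

definition wpar :: "(int \<Rightarrow> int) \<Rightarrow> gen list \<Rightarrow> int" where
  "wpar s w = (\<Sum>g\<leftarrow>w. gpar s g) mod 2"

definition homog :: "(int \<Rightarrow> int) \<Rightarrow> int \<Rightarrow> fa \<Rightarrow> bool" where
  "homog s p y \<longleftrightarrow> (\<forall>w. y w \<noteq> 0 \<longrightarrow> wpar s w = p mod 2)"

definition sgn2 :: "int \<Rightarrow> int \<Rightarrow> complex" where
  "sgn2 a b = (-1) ^ nat (a * b)"

text \<open>A weight is a coefficient function on the simple roots alpha_0..alpha_{N-1}.\<close>
definition bform :: "(int \<Rightarrow> int) \<Rightarrow> nat \<Rightarrow> (int \<Rightarrow> int) \<Rightarrow> (int \<Rightarrow> int) \<Rightarrow> int" where
  "bform s N x y = (\<Sum>j\<in>{0..<int N}. \<Sum>k\<in>{0..<int N}. x j * y k * sA s N j k)"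

definition unitw :: "int \<Rightarrow> int \<Rightarrow> int" where
  "unitw i = (\<lambda>j. if j = i then 1 else 0)"

text \<open>Homogeneous element: (element, parity, weight).\<close>
type_synonym hel = "fa \<times> int \<times> (int \<Rightarrow> int)"

definition qbr :: "(int \<Rightarrow> int) \<Rightarrow> nat \<Rightarrow> complex \<Rightarrow> hel \<Rightarrow> hel \<Rightarrow> hel" where
  "qbr s N q X Y = (case X of (x, px, wx) \<Rightarrow> case Y of (y, py, wy) \<Rightarrow>
     (fsub (fmul x y) (fsmul (sgn2 px py * q powi bform s N wx wy) (fmul y x)),
      px + py, (\<lambda>k. wx k + wy k)))"

definition qE :: "(int \<Rightarrow> int) \<Rightarrow> nat \<Rightarrow> int \<Rightarrow> int \<Rightarrow> hel" where
  "qE s N i a = (fgen (GE (i mod int N) a), spar s i, unitw (i mod int N))"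

definition qF :: "(int \<Rightarrow> int) \<Rightarrow> nat \<Rightarrow> int \<Rightarrow> int \<Rightarrow> hel" where
  "qF s N i a = (fgen (GF (i mod int N) a), spar s i, (\<lambda>k. - unitw (i mod int N) k))"

text \<open>For X = sum_{r>=1} a_r x^r, xpow a j n is the coefficient of x^n in X^j
  (noncommutative), and expc a n the coefficient of x^n in exp(X) = sum_j X^j/j!.\<close>
fun xpow :: "(nat \<Rightarrow> fa) \<Rightarrow> nat \<Rightarrow> nat \<Rightarrow> fa" where
  "xpow a 0 n = (if n = 0 then fone else fzero)"
| "xpow a (Suc j) n = fsum (\<lambda>r. fmul (a r) (xpow a j (n - r))) {1..n}"

definition expc :: "(nat \<Rightarrow> fa) \<Rightarrow> nat \<Rightarrow> fa" where
  "expc a n = fsum (\<lambda>j. fsmul (1 / of_nat (fact j)) (xpow a j n)) {0..n}"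

text \<open>Kplus q N i t = coefficient of z^{-t} in K_i^+(z); Kminus likewise for K_i^-(z).\<close>
definition Kplus :: "complex \<Rightarrow> nat \<Rightarrow> int \<Rightarrow> int \<Rightarrow> fa" where
  "Kplus q N i t = (if t < 0 then fzero else
     fmul (fgen (GK (i mod int N)))
          (expc (\<lambda>r. fsmul (q - inverse q) (fgen (GH (i mod int N) (int r)))) (nat t)))"

definition Kminus :: "complex \<Rightarrow> nat \<Rightarrow> int \<Rightarrow> int \<Rightarrow> fa" where
  "Kminus q N i t = (if 0 < t then fzero else
     fmul (fgen (GKi (i mod int N)))
          (expc (\<lambda>r. fsmul (- (q - inverse q)) (fgen (GH (i mod int N) (- int r)))) (nat (- t))))"

definition Ec :: "nat \<Rightarrow> int \<Rightarrow> int \<Rightarrow> fa" where "Ec N i a = fgen (GE (i mod int N) a)"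
definition Fc :: "nat \<Rightarrow> int \<Rightarrow> int \<Rightarrow> fa" where "Fc N i a = fgen (GF (i mod int N) a)"
definition Kc :: "nat \<Rightarrow> int \<Rightarrow> fa" where "Kc N i = fgen (GK (i mod int N))"
definition Kic :: "nat \<Rightarrow> int \<Rightarrow> fa" where "Kic N i = fgen (GKi (i mod int N))"

text \<open>Coefficient of z^{-a} w^{-b} in
  (c1 z - c2 w) X(z) Y(w) - sg (c3 z - c4 w) Y(w) X(z), where X(z) = sum_k X_k z^{-k}.\<close>
definition rel3 :: "complex \<Rightarrow> complex \<Rightarrow> complex \<Rightarrow> complex \<Rightarrow> complex \<Rightarrow>
    (int \<Rightarrow> fa) \<Rightarrow> (int \<Rightarrow> fa) \<Rightarrow> int \<Rightarrow> int \<Rightarrow> fa" where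
  "rel3 c1 c2 c3 c4 sg X Y a b =
     fsub (fsub (fsmul c1 (fmul (X (a + 1)) (Y b))) (fsmul c2 (fmul (X a) (Y (b + 1)))))
          (fsmul sg (fsub (fsmul c3 (fmul (Y b) (X (a + 1)))) (fsmul c4 (fmul (Y (b + 1)) (X a)))))"

definition scomm :: "complex \<Rightarrow> fa \<Rightarrow> fa \<Rightarrow> fa" where
  "scomm sg x y = fsub (fmul x y) (fsmul sg (fmul y x))"

section \<open>Defining relations of E_s(q1,q2,q3) (coefficientwise)\<close>

definition rels :: "(int \<Rightarrow> int) \<Rightarrow> nat \<Rightarrow> nat \<Rightarrow> nat \<Rightarrow> complex \<Rightarrow> complex \<Rightarrow> fa set" where
  "rels s N m n d q =
   (let Ih = {0..<int N}; A = sA s N; M = sM s N; p = spar s;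
        E = Ec N; F = Fc N; Kp = Kplus q N; Km = Kminus q N in
   \<comment> \<open>invertibility of K_i\<close>
   {fsub (fmul (Kc N i) (Kic N i)) fone | i. i \<in> Ih}
   \<union> {fsub (fmul (Kic N i) (Kc N i)) fone | i. i \<in> Ih}
   \<comment> \<open>(1)\<close>
   \<union> {fsub (fmul (Kc N i) (Kc N j)) (fmul (Kc N j) (Kc N i)) | i j. i \<in> Ih \<and> j \<in> Ih}
   \<union> {fsub (fmul (Kc N i) (fmul (E j a) (Kic N i))) (fsmul (q powi A i j) (E j a))
        | i j a. i \<in> Ih \<and> j \<in> Ih}
   \<union> {fsub (fmul (Kc N i) (fmul (F j a) (Kic N i))) (fsmul (q powi (- A i j)) (F j a))
        | i j a. i \<in> Ih \<and> j \<in> Ih}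
   \<comment> \<open>(2)\<close>
   \<union> {fsub (fmul (Kp i a) (Kp j b)) (fmul (Kp j b) (Kp i a)) | i j a b. i \<in> Ih \<and> j \<in> Ih}
   \<union> {fsub (fmul (Km i a) (Km j b)) (fmul (Km j b) (Km i a)) | i j a b. i \<in> Ih \<and> j \<in> Ih}
   \<union> {fsub (fmul (Km i a) (Kp j b)) (fmul (Kp j b) (Km i a)) | i j a b. i \<in> Ih \<and> j \<in> Ih}
   \<comment> \<open>(3)\<close>
   \<union> {rel3 (d powi M i j) (q powi A i j) (d powi M i j * q powi A i j) 1 1 (KX i) (E j) a b
        | i j a b KX. i \<in> Ih \<and> j \<in> Ih \<and> (KX = Kp \<or> KX = Km)}
   \<union> {rel3 (d powi M i j) (q powi (- A i j)) (d powi M i j * q powi (- A i j)) 1 1 (KX i) (F j) a b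
        | i j a b KX. i \<in> Ih \<and> j \<in> Ih \<and> (KX = Kp \<or> KX = Km)}
   \<comment> \<open>(4)\<close>
   \<union> {fsub (scomm (sgn2 (p i) (p j)) (E i a) (F j b))
          (fsmul ((if i = j then 1 else 0) / (q - inverse q)) (fsub (Kp i (a + b)) (Km i (a + b))))
        | i j a b. i \<in> Ih \<and> j \<in> Ih}
   \<comment> \<open>(5)\<close>
   \<union> {scomm (sgn2 (p i) (p j)) (E i a) (E j b) | i j a b. i \<in> Ih \<and> j \<in> Ih \<and> A i j = 0}
   \<union> {scomm (sgn2 (p i) (p j)) (F i a) (F j b) | i j a b. i \<in> Ih \<and> j \<in> Ih \<and> A i j = 0}
   \<union> {rel3 (d powi M i j) (q powi A i j) (d powi M i j * q powi A i j) 1 (sgn2 (p i) (p j))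
          (E i) (E j) a b | i j a b. i \<in> Ih \<and> j \<in> Ih \<and> A i j \<noteq> 0}
   \<union> {rel3 (d powi M i j) (q powi (- A i j)) (d powi M i j * q powi (- A i j)) 1 (sgn2 (p i) (p j))
          (F i) (F j) a b | i j a b. i \<in> Ih \<and> j \<in> Ih \<and> A i j \<noteq> 0}
   \<comment> \<open>(6), first kind: coefficient of z1^{-a} z2^{-b} w^{-c}\<close>
   \<union> {fadd (fst (qbr s N q (G i a) (qbr s N q (G i b) (G (i + e) c))))
           (fst (qbr s N q (G i b) (qbr s N q (G i a) (G (i + e) c))))
        | i e a b c G. i \<in> Ih \<and> A i i \<noteq> 0 \<and> (e = 1 \<or> e = -1) \<and> (G = qE s N \<or> G = qF s N)}
   \<comment> \<open>(6), second kind: coefficient of z1^{-a} z2^{-b} w1^{-c1} w2^{-c2}\<close>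
   \<union> {fadd (fst (qbr s N q (G i a) (qbr s N q (G (i + 1) c1) (qbr s N q (G i b) (G (i - 1) c2)))))
           (fst (qbr s N q (G i b) (qbr s N q (G (i + 1) c1) (qbr s N q (G i a) (G (i - 1) c2)))))
        | i a b c1 c2 G. i \<in> Ih \<and> m * n \<noteq> 2 \<and> A i i = 0 \<and> (G = qE s N \<or> G = qF s N)}
   \<comment> \<open>(6), third kind: coefficient of z1^{-a1} z2^{-a2} w1^{-b1} w2^{-b2} y^{-c}\<close>
   \<union> {fsub
        (fsuml (\<lambda>(x1, x2, y1, y2). fst (qbr s N q (G (i - 1) x1) (qbr s N q (G (i + 1) y1)
              (qbr s N q (G (i - 1) x2) (qbr s N q (G (i + 1) y2) (G i c))))))
           [(a1, a2, b1, b2), (a2, a1, b1, b2), (a1, a2, b2, b1), (a2, a1, b2, b1)])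
        (fsuml (\<lambda>(x1, x2, y1, y2). fst (qbr s N q (G (i + 1) y1) (qbr s N q (G (i - 1) x1)
              (qbr s N q (G (i + 1) y2) (qbr s N q (G (i - 1) x2) (G i c))))))
           [(a1, a2, b1, b2), (a2, a1, b1, b2), (a1, a2, b2, b1), (a2, a1, b2, b1)])
        | i a1 a2 b1 b2 c G. i \<in> Ih \<and> m * n = 2 \<and> A i i \<noteq> 0 \<and> (G = qE s N \<or> G = qF s N)})"

end

(* The map tau reflects the index of every generator, i to -i modulo N, with the sign -1 on
   the F and H generators.  Reflection negates the Cartan matrix A and preserves M and the
   parities, so together with q to 1/q it sends each defining relation of E_s(q1,q2,q3) to a
   scalar multiple of a defining relation of E_s'(1/q3,1/q2,1/q1).  The one exception is the Serre
   relation of the second kind, whose image has E_(i+1) and E_(i-1) exchanged; it still lies in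
   the ideal because E_i anticommutes with itself (A_ii = 0) while E_(i-1) and E_(i+1) commute up
   to sign (N >= 4; for N = 3 and mn <> 2 the sequence s is constant, so A_ii <> 0).  Hence tau
   maps the ideal into the reflected ideal and, since s'' = s, the same map sends it back; as
   tau is an involution on polynomials it induces the isomorphism. *)

theory Submission
  imports Defs
begin

section \<open>The free algebra\<close>

definition fsupp :: "fa \<Rightarrow> gen list set" where "fsupp x = {w. x w \<noteq> 0}"

lemma fzero_apply [simp]: "fzero w = 0" by (simp add: fzero_def)
lemma fone_apply [simp]: "fone w = (if w = [] then 1 else 0)" by (simp add: fone_def)
lemma fgen_apply [simp]: "fgen g w = (if w = [g] then 1 else 0)" by (simp add: fgen_def)
lemma fadd_apply [simp]: "fadd x y w = x w + y w" by (simp add: fadd_def)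
lemma fsub_apply [simp]: "fsub x y w = x w - y w" by (simp add: fsub_def)
lemma fsmul_apply [simp]: "fsmul c x w = c * x w" by (simp add: fsmul_def)
lemma fsum_apply [simp]: "fsum f A w = (\<Sum>a\<in>A. f a w)" by (simp add: fsum_def)
lemma fsuml_apply [simp]: "fsuml f xs w = (\<Sum>x\<leftarrow>xs. f x w)" by (simp add: fsuml_def)

lemma fmul_Nil [simp]: "fmul x y [] = x [] * y []" by (simp add: fmul_def)

lemma fmul_Cons: "fmul x y (g # w) = x [] * y (g # w) + fmul (\<lambda>u. x (g # u)) y w"
  unfolding fmul_def by (simp add: sum.atMost_Suc_shift del: sum.atMost_Suc)

lemma fmul_sum_left: "fmul (\<lambda>w. \<Sum>i\<in>I. x i w) y w = (\<Sum>i\<in>I. fmul (x i) y w)"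
  by (simp add: fmul_def sum_distrib_right sum.swap[of _ I])

lemma fmul_sum_right: "fmul x (\<lambda>w. \<Sum>i\<in>I. y i w) w = (\<Sum>i\<in>I. fmul x (y i) w)"
  by (simp add: fmul_def sum_distrib_left sum.swap[of _ I])

lemma fmul_scale_left: "fmul (\<lambda>w. c * x w) y w = c * fmul x y w"
  by (simp add: fmul_def sum_distrib_left algebra_simps)

lemma fmul_scale_right: "fmul x (\<lambda>w. c * y w) w = c * fmul x y w"
  by (simp add: fmul_def sum_distrib_left algebra_simps)

lemma fmul_linear_left: "fmul (\<lambda>u. c * x u + y u) z w = c * fmul x z w + fmul y z w"
  by (simp add: fmul_def sum.distrib sum_distrib_left algebra_simps)

lemma fmul_linear_right: "fmul z (\<lambda>u. c * x u + y u) w = c * fmul z x w + fmul z y w"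
  by (simp add: fmul_def sum.distrib sum_distrib_left algebra_simps)

lemma fmul_assoc: "fmul (fmul x y) z = fmul x (fmul y z)"
proof
  fix w show "fmul (fmul x y) z w = fmul x (fmul y z) w"
  proof (induction w arbitrary: x)
    case (Cons g w)
    have "(\<lambda>u. fmul x y (g # u)) = (\<lambda>u. x [] * y (g # u) + fmul (\<lambda>u. x (g # u)) y u)"
      by (simp add: fmul_Cons)
    then show ?case
      by (simp add: fmul_Cons fmul_linear_left Cons algebra_simps)
  qed simp
qed

lemma fmul_fadd_left: "fmul (fadd x y) z = fadd (fmul x z) (fmul y z)"
  by (rule ext) (simp add: fmul_def sum.distrib algebra_simps)

lemma fmul_fadd_right: "fmul z (fadd x y) = fadd (fmul z x) (fmul z y)"
  by (rule ext) (simp add: fmul_def sum.distrib algebra_simps)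

lemma fmul_fsmul_left: "fmul (fsmul c x) z = fsmul c (fmul x z)"
  by (rule ext) (simp add: fmul_def sum_distrib_left algebra_simps)

lemma fmul_fsmul_right: "fmul z (fsmul c x) = fsmul c (fmul z x)"
  by (rule ext) (simp add: fmul_def sum_distrib_left algebra_simps)

lemma fmul_fzero_left [simp]: "fmul fzero z = fzero"
  by (rule ext) (simp add: fmul_def)

lemma fmul_fzero_right [simp]: "fmul z fzero = fzero"
  by (rule ext) (simp add: fmul_def)

lemma fmul_fone_left [simp]: "fmul fone z = z"
proof
  fix w show "fmul fone z w = z w"
    by (cases w) (simp_all add: fmul_Cons fmul_def[of "\<lambda>u. 0"])
qed

lemma fmul_fone_right [simp]: "fmul z fone = z"
proof
  fix w show "fmul z fone w = z w"
    by (induction w arbitrary: z) (simp_all add: fmul_Cons)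
qed

lemma fsmul_fsmul: "fsmul c (fsmul d x) = fsmul (c * d) x"
  by (rule ext) simp

lemma fsmul_one [simp]: "fsmul 1 x = x"
  by (rule ext) simp

lemma fsub_self: "fsub x x = fzero"
  by (rule ext) simp

lemma fadd_fsmul_neg_self: "fadd (fsmul (-1) x) x = fzero"
  by (rule ext) simp

declare fone_apply [simp del] fgen_apply [simp del]

definition fmono :: "gen list \<Rightarrow> fa" where "fmono u = (\<lambda>w. if w = u then 1 else 0)"

lemma fmono_apply: "fmono u w = (if w = u then 1 else 0)" by (simp add: fmono_def)

lemma fgen_eq_fmono: "fgen g = fmono [g]" by (simp add: fgen_def fmono_def)

lemma fone_eq_fmono: "fone = fmono []" by (simp add: fone_def fmono_def)

lemma fmul_fmono_left:
  "fmul (fmono u) y = (\<lambda>w. if \<exists>t. w = u @ t then y (drop (length u) w) else 0)"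
proof (induction u)
  case Nil then show ?case
    using fmul_fone_left[of y] by (simp add: fone_eq_fmono)
next
  case (Cons g u)
  show ?case
  proof
    fix w show "fmul (fmono (g # u)) y w
        = (if \<exists>t. w = (g # u) @ t then y (drop (length (g # u)) w) else 0)"
    proof (cases w)
      case (Cons h w')
      have "(\<lambda>t. fmono (g # u) (h # t)) = (if h = g then fmono u else fzero)"
        by (auto simp: fmono_def fun_eq_iff)
      then show ?thesis using Cons Cons.IH
        by (auto simp: fmul_Cons fmul_def[of fzero] fmono_apply)
    qed (simp add: fmono_apply)
  qed
qed

lemma fmul_fmono: "fmul (fmono u) (fmono v) = fmono (u @ v)"
  unfolding fmul_fmono_left by (auto simp: fmono_apply fun_eq_iff)

lemma fa_eq_sum_fmono:
  assumes "finite S" "fsupp x \<subseteq> S"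
  shows "x = (\<lambda>w. \<Sum>u\<in>S. x u * fmono u w)"
proof
  fix w show "x w = (\<Sum>u\<in>S. x u * fmono u w)"
  proof (cases "w \<in> S")
    case True then show ?thesis
      using assms by (simp add: fmono_apply if_distrib sum.delta' cong: if_cong)
  next
    case False
    then have "x w = 0" using assms by (auto simp: fsupp_def)
    moreover have "(\<Sum>u\<in>S. x u * fmono u w) = 0" using False by (intro sum.neutral)
        (auto simp: fmono_apply)
    ultimately show ?thesis by simp
  qed
qed

lemma fsupp_sum: "fsupp (\<lambda>w. \<Sum>i\<in>I. x i w) \<subseteq> (\<Union>i\<in>I. fsupp (x i))"
  by (auto simp: fsupp_def dest: sum.not_neutral_contains_not_neutral)

lemma fsupp_fadd: "fsupp (fadd x y) \<subseteq> fsupp x \<union> fsupp y" by (auto simp: fsupp_def)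
lemma fsupp_fsub: "fsupp (fsub x y) \<subseteq> fsupp x \<union> fsupp y" by (auto simp: fsupp_def)
lemma fsupp_fsmul: "fsupp (fsmul c x) \<subseteq> fsupp x" by (auto simp: fsupp_def)
lemma fsupp_fgen: "fsupp (fgen g) = {[g]}" by (auto simp: fsupp_def fgen_apply)
lemma fsupp_fone: "fsupp fone = {[]}" by (auto simp: fsupp_def fone_apply)
lemma fsupp_fzero: "fsupp fzero = {}" by (auto simp: fsupp_def)

lemma fsupp_fmul: "fsupp (fmul x y) \<subseteq> (\<lambda>(u, v). u @ v) ` (fsupp x \<times> fsupp y)"
proof
  fix w assume "w \<in> fsupp (fmul x y)"
  then have "(\<Sum>k\<le>length w. x (take k w) * y (drop k w)) \<noteq> 0" by (simp add: fsupp_def fmul_def)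
  then obtain k where "x (take k w) * y (drop k w) \<noteq> 0"
    by (meson sum.not_neutral_contains_not_neutral)
  then have "(take k w, drop k w) \<in> fsupp x \<times> fsupp y" by (simp add: fsupp_def)
  then show "w \<in> (\<lambda>(u, v). u @ v) ` (fsupp x \<times> fsupp y)"
    by (metis (no_types, lifting) append_take_drop_id case_prod_conv image_eqI)
qed

lemma fsupp_fsuml: "fsupp (fsuml f xs) \<subseteq> (\<Union>a\<in>set xs. fsupp (f a))"
  by (induction xs) (auto simp: fsupp_def fsuml_def)

lemma finite_fsupp_fadd [simp]: "finite (fsupp x) \<Longrightarrow> finite (fsupp y) \<Longrightarrow> finite (fsupp (fadd x y))"
  by (rule finite_subset[OF fsupp_fadd]) simp
lemma finite_fsupp_fsub [simp]: "finite (fsupp x) \<Longrightarrow> finite (fsupp y) \<Longrightarrow> finite (fsupp (fsub x y))"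
  by (rule finite_subset[OF fsupp_fsub]) simp
lemma finite_fsupp_fsmul [simp]: "finite (fsupp x) \<Longrightarrow> finite (fsupp (fsmul c x))"
  by (rule finite_subset[OF fsupp_fsmul])
lemma finite_fsupp_fgen [simp]: "finite (fsupp (fgen g))" by (simp add: fsupp_fgen)
lemma finite_fsupp_fone [simp]: "finite (fsupp fone)" by (simp add: fsupp_fone)
lemma finite_fsupp_fzero [simp]: "finite (fsupp fzero)" by (simp add: fsupp_fzero)
lemma finite_fsupp_fmul [simp]: "finite (fsupp x) \<Longrightarrow> finite (fsupp y) \<Longrightarrow> finite (fsupp (fmul x y))"
  by (rule finite_subset[OF fsupp_fmul]) simp
lemma finite_fsupp_fsum [simp]:
  "finite A \<Longrightarrow> (\<And>a. a \<in> A \<Longrightarrow> finite (fsupp (f a))) \<Longrightarrow> finite (fsupp (fsum f A))"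
  by (rule finite_subset[OF fsupp_sum[folded fsum_def]]) simp
lemma finite_fsupp_fsuml [simp]:
  "\<forall>a\<in>set xs. finite (fsupp (f a)) \<Longrightarrow> finite (fsupp (fsuml f xs))"
  by (rule finite_subset[OF fsupp_fsuml]) simp

lemma fext_eq_sum: "finite S \<Longrightarrow> fsupp x \<subseteq> S \<Longrightarrow> fext f x = (\<lambda>w. \<Sum>u\<in>S. x u * wimg f u w)"
  unfolding fext_def by (rule ext, rule sum.mono_neutral_left) (auto simp: fsupp_def)

lemma fext_sum:
  assumes "finite I" "\<And>i. i \<in> I \<Longrightarrow> finite (fsupp (x i))"
  shows "fext f (\<lambda>w. \<Sum>i\<in>I. x i w) = (\<lambda>w. \<Sum>i\<in>I. fext f (x i) w)"
proof -
  define S where "S = (\<Union>i\<in>I. fsupp (x i))"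
  have S: "finite S" using assms by (simp add: S_def)
  have "fext f (\<lambda>w. \<Sum>i\<in>I. x i w) = (\<lambda>w. \<Sum>u\<in>S. (\<Sum>i\<in>I. x i u) * wimg f u w)"
    by (rule fext_eq_sum[OF S]) (use fsupp_sum S_def in blast)
  also have "\<dots> = (\<lambda>w. \<Sum>i\<in>I. \<Sum>u\<in>S. x i u * wimg f u w)"
    by (simp add: sum_distrib_right sum.swap[of _ S])
  also have "\<dots> = (\<lambda>w. \<Sum>i\<in>I. fext f (x i) w)"
  proof -
    have "fext f (x i) = (\<lambda>w. \<Sum>u\<in>S. x i u * wimg f u w)" if "i \<in> I" for i
      by (rule fext_eq_sum[OF S]) (use that S_def in blast)
    then show ?thesis by (auto intro!: ext sum.cong)
  qed
  finally show ?thesis .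
qed

lemma fext_fsmul: "fext f (fsmul c x) = fsmul c (fext f x)"
proof (cases "c = 0")
  case True then show ?thesis by (simp add: fext_def fsmul_def)
next
  case False
  then have "{u. fsmul c x u \<noteq> 0} = {u. x u \<noteq> 0}" by auto
  then show ?thesis unfolding fext_def by (auto simp: sum_distrib_left algebra_simps fsmul_def)
qed

lemma fext_scale: "fext f (\<lambda>w. c * x w) = (\<lambda>w. c * fext f x w)"
  using fext_fsmul[of f c x] by (simp add: fsmul_def)

lemma fext_fzero [simp]: "fext f fzero = fzero"
  by (simp add: fext_def fzero_def)

lemma fext_fmono: "fext f (fmono u) = wimg f u"
proof -
  have "{w. fmono u w \<noteq> 0} = {u}" by (auto simp: fmono_apply)
  then show ?thesis by (simp add: fext_def fmono_apply)
qed

lemma wimg_append: "wimg f (u @ v) = fmul (wimg f u) (wimg f v)"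
  by (induction u) (simp_all add: fmul_assoc)

lemma fext_fmul:
  assumes x: "finite (fsupp x)" and y: "finite (fsupp y)"
  shows "fext f (fmul x y) = fmul (fext f x) (fext f y)"
proof -
  define S where "S = fsupp x"
  define T where "T = fsupp y"
  have fin: "finite S" "finite T" using x y S_def T_def by auto
  have xe: "x = (\<lambda>w. \<Sum>u\<in>S. x u * fmono u w)" using fa_eq_sum_fmono[of S x] fin S_def by simp
  have ye: "y = (\<lambda>w. \<Sum>u\<in>T. y u * fmono u w)" using fa_eq_sum_fmono[of T y] fin T_def by simp
  have "fmul x y = (\<lambda>w. \<Sum>u\<in>S. \<Sum>v\<in>T. x u * y v * fmono (u @ v) w)"
  proof
    fix w
    have "fmul x y w = (\<Sum>u\<in>S. \<Sum>v\<in>T. x u * y v * fmul (fmono u) (fmono v) w)"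
      by (subst xe, subst ye)
        (simp add: fmul_sum_left fmul_sum_right fmul_scale_left fmul_scale_right
          sum_distrib_left algebra_simps)
    then show "fmul x y w = (\<Sum>u\<in>S. \<Sum>v\<in>T. x u * y v * fmono (u @ v) w)"
      by (simp add: fmul_fmono)
  qed
  moreover have "fext f (\<lambda>w. \<Sum>u\<in>S. \<Sum>v\<in>T. x u * y v * fmono (u @ v) w)
      = (\<lambda>w. \<Sum>u\<in>S. \<Sum>v\<in>T. x u * y v * wimg f (u @ v) w)"
  proof -
    have fin_inner: "finite (fsupp (\<lambda>w. \<Sum>v\<in>T. x u * y v * fmono (u @ v) w))" for u
      using fsupp_sum[of "\<lambda>v w. x u * y v * fmono (u @ v) w" T] fin
      by (elim finite_subset) (auto simp: fsupp_def fmono_apply)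
    have "fext f (\<lambda>w. x u * y v * fmono (u @ v) w) = (\<lambda>w. x u * y v * wimg f (u @ v) w)" for u v
      using fext_scale[of f "x u * y v" "fmono (u @ v)"] by (simp add: fext_fmono)
    then show ?thesis
      using fin fin_inner by (simp add: fext_sum fsupp_def fmono_apply)
  qed
  moreover have "(\<lambda>w. \<Sum>u\<in>S. \<Sum>v\<in>T. x u * y v * wimg f (u @ v) w)
      = fmul (\<lambda>w. \<Sum>u\<in>S. x u * wimg f u w) (\<lambda>w. \<Sum>u\<in>T. y u * wimg f u w)"
    by (rule ext) (simp add: wimg_append fmul_sum_left fmul_sum_right fmul_scale_left
        fmul_scale_right sum_distrib_left algebra_simps)
  moreover have "fmul (\<lambda>w. \<Sum>u\<in>S. x u * wimg f u w) (\<lambda>w. \<Sum>u\<in>T. y u * wimg f u w)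
      = fmul (fext f x) (fext f y)"
    using fext_eq_sum[of S x f] fext_eq_sum[of T y f] fin S_def T_def by simp
  ultimately show ?thesis by simp
qed

lemma fext_fadd:
  assumes "finite (fsupp x)" "finite (fsupp y)"
  shows "fext f (fadd x y) = fadd (fext f x) (fext f y)"
proof -
  define S where "S = fsupp x \<union> fsupp y"
  have S: "finite S" using assms S_def by simp
  have "fext f (fadd x y) = (\<lambda>w. \<Sum>u\<in>S. fadd x y u * wimg f u w)"
    by (rule fext_eq_sum[OF S]) (use fsupp_fadd[of x y] S_def in blast)
  moreover have "fext f x = (\<lambda>w. \<Sum>u\<in>S. x u * wimg f u w)"
    by (rule fext_eq_sum[OF S]) (use S_def in blast)
  moreover have "fext f y = (\<lambda>w. \<Sum>u\<in>S. y u * wimg f u w)"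
    by (rule fext_eq_sum[OF S]) (use S_def in blast)
  ultimately show ?thesis by (simp add: fadd_def sum.distrib algebra_simps)
qed

lemma fext_fsub:
  assumes "finite (fsupp x)" "finite (fsupp y)"
  shows "fext f (fsub x y) = fsub (fext f x) (fext f y)"
proof -
  have "fsub x y = fadd x (fsmul (-1) y)" by (rule ext) simp
  then show ?thesis using assms by (simp add: fext_fadd fext_fsmul) (rule ext, simp)
qed

lemma fext_fone: "fext f fone = fone"
  by (simp add: fone_eq_fmono fext_fmono)

lemma fext_fgen: "fext f (fgen g) = f g"
  by (simp add: fgen_eq_fmono fext_fmono)

lemma fext_fsum:
  "finite A \<Longrightarrow> (\<And>a. a \<in> A \<Longrightarrow> finite (fsupp (x a))) \<Longrightarrow> fext f (fsum x A) = fsum (\<lambda>a. fext f (x a)) A"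
  unfolding fsum_def by (simp add: fext_sum)

lemma fext_fsuml:
  "\<forall>a\<in>set xs. finite (fsupp (x a)) \<Longrightarrow> fext f (fsuml x xs) = fsuml (\<lambda>a. fext f (x a)) xs"
proof (induction xs)
  case Nil then show ?case by (simp add: fsuml_def fzero_def[symmetric])
next
  case (Cons a xs)
  have split: "fsuml y (a # xs) = fadd (y a) (fsuml y xs)" for y :: "'a \<Rightarrow> fa"
    by (rule ext) simp
  show ?case
    using Cons by (simp add: split fext_fadd del: fsuml_apply fadd_apply)
qed

lemma finite_fsupp_wimg: "(\<And>g. finite (fsupp (f g))) \<Longrightarrow> finite (fsupp (wimg f u))"
  by (induction u) auto

lemma fext_wimg:
  "(\<And>g. finite (fsupp (h g))) \<Longrightarrow> fext f (wimg h u) = wimg (\<lambda>g. fext f (h g)) u"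
  by (induction u) (simp_all add: fext_fone fext_fmul finite_fsupp_wimg)

lemma fext_fext:
  assumes x: "finite (fsupp x)" and h: "\<And>g. finite (fsupp (h g))"
  shows "fext f (fext h x) = fext (\<lambda>g. fext f (h g)) x"
proof -
  have "fext f (fext h x) = fext f (\<lambda>w. \<Sum>u\<in>fsupp x. x u * wimg h u w)"
    using fext_eq_sum[of "fsupp x" x h] x by simp
  also have "\<dots> = (\<lambda>w. \<Sum>u\<in>fsupp x. fext f (\<lambda>w. x u * wimg h u w) w)"
    by (rule fext_sum)
      (use x h finite_fsupp_wimg[of h]
        in \<open>auto intro: finite_subset[OF fsupp_fsmul, unfolded fsmul_def]\<close>)
  also have "\<dots> = (\<lambda>w. \<Sum>u\<in>fsupp x. x u * wimg (\<lambda>g. fext f (h g)) u w)"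
    by (simp add: fext_scale fext_wimg h)
  also have "\<dots> = fext (\<lambda>g. fext f (h g)) x"
    using fext_eq_sum[of "fsupp x" x] x by simp
  finally show ?thesis .
qed

lemma wimg_fgen: "(\<forall>g\<in>set u. f g = fgen g) \<Longrightarrow> wimg f u = fmono u"
  by (induction u) (simp_all add: fone_eq_fmono fgen_eq_fmono fmul_fmono)

lemma fext_eq_self:
  assumes x: "finite (fsupp x)" and f: "\<And>g u. u \<in> fsupp x \<Longrightarrow> g \<in> set u \<Longrightarrow> f g = fgen g"
  shows "fext f x = x"
proof -
  have "fext f x = (\<lambda>w. \<Sum>u\<in>fsupp x. x u * wimg f u w)"
    using fext_eq_sum[of "fsupp x" x] x by simp
  also have "\<dots> = (\<lambda>w. \<Sum>u\<in>fsupp x. x u * fmono u w)"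
    by (intro ext sum.cong refl) (simp add: wimg_fgen f)
  also have "\<dots> = x" using fa_eq_sum_fmono[of "fsupp x" x] x by simp
  finally show ?thesis .
qed

declare fzero_apply [simp del] fadd_apply [simp del] fsub_apply [simp del]
  fsmul_apply [simp del] fsum_apply [simp del] fsuml_apply [simp del]

lemmas fa_apply = fzero_apply fone_apply fgen_apply fadd_apply fsub_apply fsmul_apply
  fsum_apply fsuml_apply

lemma fext_xpow:
  "(\<And>r. finite (fsupp (a r))) \<Longrightarrow> fext f (xpow a j n) = xpow (\<lambda>r. fext f (a r)) j n"
proof (induction j arbitrary: n)
  case (Suc j)
  have "finite (fsupp (xpow a j k))" for k
    by (induction j arbitrary: k) (simp_all add: Suc.prems)
  then show ?case using Suc by (simp add: fext_fsum fext_fmul)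
qed (simp add: fext_fone)

lemma finite_fsupp_xpow: "(\<And>r. finite (fsupp (a r))) \<Longrightarrow> finite (fsupp (xpow a j n))"
  by (induction j arbitrary: n) auto

lemma finite_fsupp_expc: "(\<And>r. finite (fsupp (a r))) \<Longrightarrow> finite (fsupp (expc a n))"
  unfolding expc_def by (auto intro!: finite_fsupp_fsum finite_fsupp_fsmul finite_fsupp_xpow)

lemma fext_expc:
  "(\<And>r. finite (fsupp (a r))) \<Longrightarrow> fext f (expc a n) = expc (\<lambda>r. fext f (a r)) n"
  unfolding expc_def by (simp add: fext_fsum fext_fsmul fext_xpow finite_fsupp_xpow)

lemma fpoly_iff: "fpoly N x \<longleftrightarrow> finite (fsupp x) \<and> (\<forall>w\<in>fsupp x. \<forall>g\<in>set w. valid_gen N g)"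
  by (auto simp: fpoly_def fsupp_def)

lemma fpoly_finite_fsupp: "fpoly N x \<Longrightarrow> finite (fsupp x)"
  by (simp add: fpoly_iff)

lemma fpoly_fadd: "fpoly N x \<Longrightarrow> fpoly N y \<Longrightarrow> fpoly N (fadd x y)"
  using fsupp_fadd[of x y] by (auto simp: fpoly_iff)

lemma fpoly_fsmul: "fpoly N x \<Longrightarrow> fpoly N (fsmul c x)"
  using fsupp_fsmul[of c x] by (auto simp: fpoly_iff)

lemma fpoly_fone: "fpoly N fone" by (simp add: fpoly_iff fsupp_fone)
lemma fpoly_fzero: "fpoly N fzero" by (simp add: fpoly_iff fsupp_fzero)
lemma fpoly_fgen: "valid_gen N g \<Longrightarrow> fpoly N (fgen g)" by (simp add: fpoly_iff fsupp_fgen)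

lemma fpoly_fmul:
  assumes "fpoly N x" "fpoly N y"
  shows "fpoly N (fmul x y)"
proof -
  have "valid_gen N g" if "w \<in> fsupp (fmul x y)" "g \<in> set w" for w g
  proof -
    have "w \<in> (\<lambda>(u, v). u @ v) ` (fsupp x \<times> fsupp y)"
      using that(1) fsupp_fmul[of x y] by blast
    then obtain u v where "u \<in> fsupp x" "v \<in> fsupp y" "w = u @ v" by auto
    then show ?thesis using assms that(2) by (auto simp: fpoly_iff)
  qed
  then show ?thesis using assms by (simp add: fpoly_iff)
qed

lemma fpoly_sum: "finite I \<Longrightarrow> (\<And>i. i \<in> I \<Longrightarrow> fpoly N (x i)) \<Longrightarrow> fpoly N (\<lambda>w. \<Sum>i\<in>I. x i w)"
proof (induction I rule: finite_induct)
  case empty then show ?case using fpoly_fzero by (simp add: fzero_def)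
next
  case (insert i I)
  have "(\<lambda>w. \<Sum>i\<in>insert i I. x i w) = fadd (x i) (\<lambda>w. \<Sum>i\<in>I. x i w)"
    using insert by (simp add: fadd_def)
  then show ?case using insert by (simp add: fpoly_fadd)
qed

lemma fpoly_wimg:
  "(\<And>g. valid_gen N g \<Longrightarrow> fpoly N (f g)) \<Longrightarrow> \<forall>g\<in>set u. valid_gen N g \<Longrightarrow> fpoly N (wimg f u)"
  by (induction u) (auto intro!: fpoly_fmul fpoly_fone)

lemma fpoly_fext:
  assumes f: "\<And>g. valid_gen N g \<Longrightarrow> fpoly N (f g)" and x: "fpoly N x"
  shows "fpoly N (fext f x)"
proof -
  have "fext f x = (\<lambda>w. \<Sum>u\<in>fsupp x. fsmul (x u) (wimg f u) w)"
    using fext_eq_sum[of "fsupp x" x f] x by (simp add: fpoly_finite_fsupp fsmul_apply)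
  moreover have "fpoly N (fsmul (x u) (wimg f u))" if "u \<in> fsupp x" for u
    using that x f by (auto simp: fpoly_iff[of N x] intro!: fpoly_fsmul fpoly_wimg)
  ultimately show ?thesis
    using x by (simp add: fpoly_sum fpoly_finite_fsupp)
qed

lemma tsideal_finite_fsupp:
  "x \<in> tsideal N R \<Longrightarrow> (\<And>r. r \<in> R \<Longrightarrow> finite (fsupp r)) \<Longrightarrow> finite (fsupp x)"
  by (induction rule: tsideal.induct) (auto intro!: finite_fsupp_fmul dest: fpoly_finite_fsupp)

lemma tsideal_fmul:
  assumes "x \<in> tsideal N R" "fpoly N a" "fpoly N b"
  shows "fmul a (fmul x b) \<in> tsideal N R"
  using assms
proof (induction arbitrary: a b rule: tsideal.induct)
  case zero then show ?case by (simp add: tsideal.zero)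
next
  case (add x y) then show ?case
    by (simp add: fmul_fadd_left fmul_fadd_right tsideal.add)
next
  case (gen r a' b')
  have "fmul a (fmul (fmul a' (fmul r b')) b) = fmul (fmul a a') (fmul r (fmul b' b))"
    by (simp add: fmul_assoc)
  then show ?case using gen by (auto intro!: tsideal.gen fpoly_fmul)
qed

lemma tsideal_fsmul: "x \<in> tsideal N R \<Longrightarrow> fsmul c x \<in> tsideal N R"
  using tsideal_fmul[of x N R "fsmul c fone" fone]
  by (simp add: fmul_fsmul_left fpoly_fsmul fpoly_fone)

lemma tsideal_fsmul_rel: "r \<in> R \<Longrightarrow> fsmul c r \<in> tsideal N R"
  using tsideal.gen[of r R N "fsmul c fone" fone]
  by (simp add: fmul_fsmul_left fpoly_fsmul fpoly_fone)

lemma tsideal_rel: "r \<in> R \<Longrightarrow> r \<in> tsideal N R"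
  using tsideal.gen[of r R N fone fone] by (simp add: fpoly_fone)

text \<open>Formal linear combinations of words in the variables \<open>v 0, v 1, \<dots>\<close>; identities in the
  free algebra reduce to comparing coefficients of such combinations.\<close>

fun eval_word :: "(nat \<Rightarrow> fa) \<Rightarrow> nat list \<Rightarrow> fa" where
  "eval_word v [] = fone"
| "eval_word v (k # u) = fmul (v k) (eval_word v u)"

definition eval_words :: "(nat \<Rightarrow> fa) \<Rightarrow> (complex \<times> nat list) list \<Rightarrow> fa" where
  "eval_words v L = (\<lambda>w. \<Sum>p\<leftarrow>L. fst p * eval_word v (snd p) w)"

definition word_coeff :: "(complex \<times> nat list) list \<Rightarrow> nat list \<Rightarrow> complex" where
  "word_coeff L u = (\<Sum>p\<leftarrow>L. if snd p = u then fst p else 0)"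

lemma eval_word_append: "eval_word v (u @ t) = fmul (eval_word v u) (eval_word v t)"
  by (induction u) (simp_all add: fmul_assoc)

lemma eval_words_Cons: "eval_words v (p # L) =
    (\<lambda>w. fst p * eval_word v (snd p) w + eval_words v L w)"
  by (simp add: eval_words_def)

lemma fadd_eval_words: "fadd (eval_words v L1) (eval_words v L2) = eval_words v (L1 @ L2)"
  by (simp add: eval_words_def fadd_def)

lemma fsmul_eval_words: "fsmul c (eval_words v L) = eval_words v (map (\<lambda>p. (c * fst p, snd p)) L)"
  unfolding eval_words_def fsmul_def by (rule ext, induction L) (simp_all add: algebra_simps)

lemma fsub_eval_words:
  "fsub (eval_words v L1) (eval_words v L2) = eval_words v (L1 @ map (\<lambda>p. (- fst p, snd p)) L2)"
proof -
  have "fsub (eval_words v L1) (eval_words v L2) = fadd (eval_words v L1)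
      (fsmul (-1) (eval_words v L2))"
    by (rule ext) (simp add: fa_apply)
  then show ?thesis by (simp add: fsmul_eval_words fadd_eval_words)
qed

lemma fmul_eval_words:
  "fmul (eval_words v L1) (eval_words v L2)
    = eval_words v (concat (map (\<lambda>p. map (\<lambda>r. (fst p * fst r, snd p @ snd r)) L2) L1))"
proof
  fix w
  have left: "fmul (eval_words v L) y w = (\<Sum>p\<leftarrow>L. fst p * fmul (eval_word v (snd p)) y w)" for L y
    by (induction L) (simp_all add: eval_words_Cons fmul_linear_left,
        simp add: eval_words_def fmul_def)
  have right: "fmul y (eval_words v L) w = (\<Sum>p\<leftarrow>L. fst p * fmul y (eval_word v (snd p)) w)" for L y
    by (induction L) (simp_all add: eval_words_Cons fmul_linear_right,
        simp add: eval_words_def fmul_def)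
  have "fmul (eval_words v L1) (eval_words v L2) w
      = (\<Sum>p\<leftarrow>L1. fst p * (\<Sum>r\<leftarrow>L2. fst r * fmul (eval_word v (snd p)) (eval_word v (snd r)) w))"
    by (subst left) (simp only: right)
  also have "\<dots> = eval_words v (concat (map (\<lambda>p. map (\<lambda>r. (fst p * fst r, snd p @ snd r)) L2) L1)) w"
    by (induction L1) (simp_all add: eval_words_def eval_word_append sum_list_const_mult
        algebra_simps comp_def)
  finally show "fmul (eval_words v L1) (eval_words v L2) w
      = eval_words v (concat (map (\<lambda>p. map (\<lambda>r. (fst p * fst r, snd p @ snd r)) L2) L1)) w" .
qed

lemma eval_words_eq_sum:
  "finite W \<Longrightarrow> set (map snd L) \<subseteq> W
    \<Longrightarrow> eval_words v L = (\<lambda>w. \<Sum>u\<in>W. word_coeff L u * eval_word v u w)"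
proof (induction L)
  case Nil then show ?case by (simp add: eval_words_def word_coeff_def)
next
  case (Cons p L)
  have "(\<Sum>u\<in>W. (if snd p = u then fst p else 0) * eval_word v u w)
      = fst p * eval_word v (snd p) w" for w
    using Cons.prems by (simp add: if_distrib[of "\<lambda>c. c * _"] sum.delta cong: if_cong)
  then show ?case
    using Cons by (auto simp: eval_words_Cons word_coeff_def algebra_simps sum.distrib fun_eq_iff)
qed

lemma eval_words_eqI:
  assumes "\<forall>u\<in>set (map snd L1 @ map snd L2). word_coeff L1 u = word_coeff L2 u"
  shows "eval_words v L1 = eval_words v L2"
proof -
  let ?W = "set (map snd L1 @ map snd L2)"
  have "eval_words v L1 = (\<lambda>w. \<Sum>u\<in>?W. word_coeff L1 u * eval_word v u w)"
    by (rule eval_words_eq_sum) auto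
  also have "\<dots> = (\<lambda>w. \<Sum>u\<in>?W. word_coeff L2 u * eval_word v u w)"
    using assms by simp
  also have "\<dots> = eval_words v L2"
    by (rule eval_words_eq_sum[symmetric]) auto
  finally show ?thesis .
qed

lemma scomm_nested_swap:
  fixes ea eb X Y :: fa and k1 k2 k3 k1' k2' \<epsilon> :: complex
  assumes "k1 * k2 * k1' * k2' = 1" and "k1 * k2 * (k3 * k2' * \<epsilon> - k1') = k3 * k2 - k1 * \<epsilon>"
  defines "T \<equiv> \<lambda>a b. scomm k3 a (scomm k2 X (scomm k1 b Y))"
    and "T' \<equiv> \<lambda>a b. scomm k3 a (scomm k2' Y (scomm k1' b X))"
    and "r \<equiv> scomm (-1) ea eb" and "t \<equiv> scomm \<epsilon> X Y"
  shows "fadd (T ea eb) (T eb ea) =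
    fadd (fsmul (k1 * k2) (fadd (T' ea eb) (T' eb ea)))
    (fadd (fsmul (- k2) (fmul fone (fmul r (fmul Y X))))
    (fadd (fsmul (k3 * k1) (fmul (fmul X Y) (fmul r fone)))
    (fadd (fsmul (- k1) (fmul ea (fmul t eb)))
    (fadd (fsmul (- k1) (fmul eb (fmul t ea)))
    (fadd (fsmul (k1 * k2 * k2') (fmul fone (fmul r (fmul X Y))))
    (fadd (fsmul (- (k1 * k2 * k3 * k1')) (fmul (fmul Y X) (fmul r fone)))
    (fadd (fsmul (- (k1 * k2 * k3 * k2')) (fmul eb (fmul t ea)))
      (fsmul (- (k1 * k2 * k3 * k2')) (fmul ea (fmul t eb))))))))))"
proof -
  define v where "v = (\<lambda>k::nat. if k = 0 then ea else if k = 1 then eb else if k = 2 then X else Y)"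
  have vars: "ea = eval_words v [(1, [0])]" "eb = eval_words v [(1, [1])]"
    "X = eval_words v [(1, [2])]" "Y = eval_words v [(1, [3])]" "fone = eval_words v [(1, [])]"
    by (simp_all add: eval_words_def v_def)
  show ?thesis
    unfolding T_def T'_def r_def t_def scomm_def
    apply (simp only: vars)
    apply (simp only: fmul_eval_words fsub_eval_words fsmul_eval_words fadd_eval_words)
    apply (rule eval_words_eqI)
    apply (simp add: word_coeff_def)
    using assms(1,2) by algebra
qed

lemma tsideal_sandwich:
  "r \<in> R \<Longrightarrow> fpoly N a \<Longrightarrow> fpoly N b \<Longrightarrow> fsmul c (fmul a (fmul r b)) \<in> tsideal N R"
  using tsideal_fsmul[OF tsideal.gen] .

text \<open>Modulo \<open>e\<^sub>a e\<^sub>b + e\<^sub>b e\<^sub>a\<close> and \<open>X Y - \<epsilon> Y X\<close>, the two symmetrized brackets differ only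
  by the factor \<open>k1 k2\<close> (the identity \<open>scomm_nested_swap\<close>).\<close>
lemma tsideal_scomm_nested_swap:
  fixes ea eb X Y :: fa and k1 k2 k3 k1' k2' k3' \<epsilon> :: complex
  assumes swapped: "fadd (scomm k3' ea (scomm k2' Y (scomm k1' eb X)))
      (scomm k3' eb (scomm k2' Y (scomm k1' ea X))) \<in> tsideal N R"
    and anti: "scomm (-1) ea eb \<in> R" and comm: "scomm \<epsilon> X Y \<in> R"
    and polys: "fpoly N ea" "fpoly N eb" "fpoly N X" "fpoly N Y"
    and "k1 * k2 * k1' * k2' = 1" and "k1 * k2 * (k3 * k2' * \<epsilon> - k1') = k3 * k2 - k1 * \<epsilon>"
    and "k3' = k3"
  shows "fadd (scomm k3 ea (scomm k2 X (scomm k1 eb Y))) (scomm k3 eb (scomm k2 X (scomm k1 ea Y)))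
    \<in> tsideal N R"
proof -
  have sw: "fadd (scomm k3 ea (scomm k2' Y (scomm k1' eb X)))
      (scomm k3 eb (scomm k2' Y (scomm k1' ea X)))
      \<in> tsideal N R"
    using swapped \<open>k3' = k3\<close> by simp
  show ?thesis
    unfolding scomm_nested_swap[OF assms(8,9)]
    using polys
    by (intro tsideal.add tsideal_fsmul[OF sw] tsideal_sandwich[OF anti] tsideal_sandwich[OF comm])
      (simp_all add: fpoly_fmul fpoly_fone)
qed

section \<open>Parity sequences and their reflection\<close>

definition sneg :: "(int \<Rightarrow> int) \<Rightarrow> int \<Rightarrow> int" where
  "sneg s = (\<lambda>i. - s (1 - i))"

lemma sneg_sneg [simp]: "sneg (sneg s) = s"
  by (simp add: sneg_def)

lemma spar_sneg: "spar (sneg s) (- i) = spar s i"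
  by (simp add: spar_def sneg_def algebra_simps)

lemma mod_neg_eq_iff: "(- a) mod (n::int) = (- b) mod n \<longleftrightarrow> a mod n = b mod n"
  by (simp add: mod_eq_dvd_iff)
    (metis dvd_minus_iff minus_diff_eq diff_minus_eq_add add.commute uminus_add_conv_diff)

lemma mod_neg_shift_eq_iff:
  fixes n :: int
  shows "(- i) mod n = (- j + 1) mod n \<longleftrightarrow> (i + 1) mod n = j mod n"
    and "(- i + 1) mod n = (- j) mod n \<longleftrightarrow> i mod n = (j + 1) mod n"
  using mod_neg_eq_iff[of i n "j - 1"] mod_neg_eq_iff[of "i - 1" n j]
  by (simp_all add: mod_eq_dvd_iff algebra_simps)

lemma mod_neq_if_close:
  fixes a b k n :: int
  assumes "0 < k" "k < n" "\<bar>a - b\<bar> = k"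
  shows "a mod n \<noteq> b mod n"
proof
  assume "a mod n = b mod n"
  then have "n dvd (a - b)" by (simp add: mod_eq_dvd_iff)
  then have "n dvd k" using assms(3) by (metis dvd_abs_iff)
  then show False using assms(1,2) zdvd_imp_le by (meson not_le)
qed

locale parity_seq =
  fixes s :: "int \<Rightarrow> int" and N :: nat
  assumes sign: "s i = 1 \<or> s i = -1"
    and periodic: "s (i + int N) = s i"
    and N_ge_3: "3 \<le> N"
begin

lemma N_pos: "0 < N"
  using N_ge_3 by simp

lemma s_add_mult: "s (i + int N * k) = s i"
proof (induction k rule: int_induct[where k = 0])
  case (step1 k)
  have "s (i + int N * (k + 1)) = s ((i + int N * k) + int N)" by (simp add: algebra_simps)
  then show ?case using periodic[of "i + int N * k"] step1 by simp
next
  case (step2 k)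
  have "s (i + int N * k) = s ((i + int N * (k - 1)) + int N)" by (simp add: algebra_simps)
  then show ?case using periodic[of "i + int N * (k - 1)"] step2 by simp
qed simp

lemma s_mod_cong:
  assumes "i mod int N = j mod int N"
  shows "s i = s j"
proof -
  obtain k where "i - j = int N * k"
    using assms by (metis mod_eq_dvd_iff dvdE)
  then show ?thesis using s_add_mult[of j k] by (simp add: algebra_simps)
qed

lemma index_mod_neq:
  "i mod int N \<noteq> (i + 1) mod int N" "(i - 1) mod int N \<noteq> i mod int N"
  "(i - 1) mod int N \<noteq> (i + 1) mod int N"
  using mod_neq_if_close[of 1 "int N"] mod_neq_if_close[of 2 "int N"] N_ge_3 by auto

lemma sA_cong:
  assumes "i mod int N = i' mod int N" "j mod int N = j' mod int N"
  shows "sA s N i j = sA s N i' j'"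
proof -
  have "(i + 1) mod int N = (i' + 1) mod int N" "(j + 1) mod int N = (j' + 1) mod int N"
    using mod_add_cong[OF assms(1) refl] mod_add_cong[OF assms(2) refl] by simp_all
  then show ?thesis
    using assms s_mod_cong[of i i'] s_mod_cong[of j j'] s_mod_cong[of "i + 1" "i' + 1"]
    by (simp add: sA_def)
qed

lemma sM_cong:
  assumes "i mod int N = i' mod int N" "j mod int N = j' mod int N"
  shows "sM s N i j = sM s N i' j'"
proof -
  have "(i + 1) mod int N = (i' + 1) mod int N" "(j + 1) mod int N = (j' + 1) mod int N"
    using mod_add_cong[OF assms(1) refl] mod_add_cong[OF assms(2) refl] by simp_all
  then show ?thesis
    using assms s_mod_cong[of i i'] s_mod_cong[of j j'] by (simp add: sM_def)
qed

lemma spar_cong: "i mod int N = i' mod int N \<Longrightarrow> spar s i = spar s i'"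
  using s_mod_cong[of i i'] s_mod_cong[of "i + 1" "i' + 1"] mod_add_cong[of i "int N" i' 1 1]
  by (simp add: spar_def)

lemma sA_sym: "sA s N i j = sA s N j i"
proof -
  have "s i = s j \<and> s (i + 1) = s (j + 1)" if "i mod int N = j mod int N"
    using that s_mod_cong[of i j] s_mod_cong[of "i + 1" "j + 1"] mod_add_cong[of i "int N" j 1 1]
    by simp
  then show ?thesis unfolding sA_def by (auto simp: algebra_simps)
qed

lemma sA_diag: "sA s N i i = s i + s (i + 1)"
  using index_mod_neq(1)[of i] by (auto simp: sA_def dest: sym)

lemma s_succ_cong: "(i + 1) mod int N = j mod int N \<Longrightarrow> s (1 + i) = s j"
  using s_mod_cong[of "1 + i" j] by (simp add: add.commute)

lemma sA_sneg: "sA (sneg s) N (- i) (- j) = - sA s N i j"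
  unfolding sA_def sneg_def
  using mod_neg_shift_eq_iff[of i "int N" j] mod_neg_eq_iff[of i "int N" j]
    s_succ_cong[of i j] s_succ_cong[of j i]
  by (auto simp: algebra_simps)

text \<open>Here \<open>N \<ge> 3\<close> is needed: for \<open>N = 2\<close> the indices \<open>i \<pm> 1\<close> coincide and
  \<open>M\<close> is not invariant under the reflection.\<close>
lemma sM_sneg: "sM (sneg s) N (- i) (- j) = sM s N i j"
proof -
  have "\<not> ((i + 1) mod int N = j mod int N \<and> i mod int N = (j + 1) mod int N)"
    using index_mod_neq(3)[of "j"] by (metis add_diff_cancel_right' mod_diff_cong)
  then show ?thesis
    unfolding sM_def sneg_def
    using mod_neg_shift_eq_iff[of i "int N" j] s_succ_cong[of i j] s_succ_cong[of j i]
    by (auto simp: algebra_simps)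
qed

lemma parity_seq_sneg: "parity_seq (sneg s) N"
proof
  show "sneg s i = 1 \<or> sneg s i = -1" for i
    using sign[of "1 - i"] by (auto simp: sneg_def)
  show "sneg s (i + int N) = sneg s i" for i
    using periodic[of "1 - (i + int N)"] by (simp add: sneg_def)
qed (rule N_ge_3)

end

definition reflected_weight :: "nat \<Rightarrow> (int \<Rightarrow> int) \<Rightarrow> (int \<Rightarrow> int) \<Rightarrow> bool" where
  "reflected_weight N w w' \<longleftrightarrow> (\<forall>k\<in>{0..<int N}. w' k = w ((- k) mod int N))"

lemma reflected_weight_add:
  "reflected_weight N a a' \<Longrightarrow> reflected_weight N b b'
    \<Longrightarrow> reflected_weight N (\<lambda>k. a k + b k) (\<lambda>k. a' k + b' k)"
  by (simp add: reflected_weight_def)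

lemma reflected_weight_uminus:
  "reflected_weight N a a' \<Longrightarrow> reflected_weight N (\<lambda>k. - a k) (\<lambda>k. - a' k)"
  by (simp add: reflected_weight_def)

lemma reflected_weight_unitw: "reflected_weight N (unitw (i mod int N)) (unitw ((- i) mod int N))"
proof -
  have "(k = (- i) mod int N) = ((- k) mod int N = i mod int N)" if "k \<in> {0..<int N}" for k
  proof -
    have "(k = (- i) mod int N) = (k mod int N = (- i) mod int N)" using that by simp
    also have "\<dots> = ((- k) mod int N = i mod int N)" using mod_neg_eq_iff[of k "int N" "- i"] by simp
    finally show ?thesis .
  qed
  then show ?thesis by (simp add: reflected_weight_def unitw_def)
qed

context parity_seq
begin

lemma bform_unitw: "bform s N (unitw (j mod int N)) (unitw (k mod int N)) = sA s N j k"
proof -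
  let ?j = "j mod int N" and ?k = "k mod int N"
  have jk: "?j \<in> {0..<int N}" "?k \<in> {0..<int N}" using N_pos by simp_all
  have "(\<Sum>k'\<in>{0..<int N}. unitw ?j j' * unitw ?k k' * sA s N j' k') = unitw ?j j' * sA s N j' ?k"
    for j'
  proof -
    have "(\<Sum>k'\<in>{0..<int N}. unitw ?j j' * unitw ?k k' * sA s N j' k')
        = (\<Sum>k'\<in>{0..<int N}. if k' = ?k then unitw ?j j' * sA s N j' ?k else 0)"
      by (rule sum.cong) (auto simp: unitw_def)
    then show ?thesis using jk by (simp add: sum.delta')
  qed
  then have "bform s N (unitw ?j) (unitw ?k) = (\<Sum>j'\<in>{0..<int N}. unitw ?j j' * sA s N j' ?k)"
    by (simp add: bform_def)
  also have "\<dots> = (\<Sum>j'\<in>{0..<int N}. if j' = ?j then sA s N ?j ?k else 0)"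
    by (rule sum.cong) (auto simp: unitw_def)
  also have "\<dots> = sA s N ?j ?k" using jk by (simp add: sum.delta')
  finally show ?thesis using sA_cong[of ?j j ?k k] by simp
qed

lemma bform_sneg:
  assumes x: "reflected_weight N wx wx'" and y: "reflected_weight N wy wy'"
  shows "bform (sneg s) N wx' wy' = - bform s N wx wy"
proof -
  interpret r: parity_seq "sneg s" N by (rule parity_seq_sneg)
  have reflect_twice: "(- ((- k) mod int N)) mod int N = k" if "k \<in> {0..<int N}" for k
    using that by (simp add: mod_minus_eq)
  have inner: "(\<Sum>k\<in>{0..<int N}. c * wy ((- k) mod int N) * sA (sneg s) N j k)
      = (\<Sum>k\<in>{0..<int N}. c * wy k * sA (sneg s) N j ((- k) mod int N))" for c j
    by (rule sum.reindex_bij_witness[where i = "\<lambda>j. (- j) mod int N" and j = "\<lambda>j. (- j) mod int N"])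
      (auto simp: reflect_twice)
  have "bform (sneg s) N wx' wy' = (\<Sum>j\<in>{0..<int N}. \<Sum>k\<in>{0..<int N}.
      wx ((- j) mod int N) * wy k * sA (sneg s) N j ((- k) mod int N))"
    unfolding bform_def using x y by (simp add: reflected_weight_def inner)
  also have "\<dots> = (\<Sum>j\<in>{0..<int N}. \<Sum>k\<in>{0..<int N}.
      wx j * wy k * sA (sneg s) N ((- j) mod int N) ((- k) mod int N))"
    by (rule sum.reindex_bij_witness[where i = "\<lambda>j. (- j) mod int N" and j = "\<lambda>j. (- j) mod int N"])
      (auto simp: reflect_twice)
  also have "\<dots> = (\<Sum>j\<in>{0..<int N}. \<Sum>k\<in>{0..<int N}. - (wx j * wy k * sA s N j k))"
  proof -
    have "sA (sneg s) N ((- j) mod int N) ((- k) mod int N) = - sA s N j k" for j k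
      using r.sA_cong[of "(- j) mod int N" "- j" "(- k) mod int N" "- k"] sA_sneg[of j k] by simp
    then show ?thesis by simp
  qed
  also have "\<dots> = - bform s N wx wy"
    by (simp add: bform_def sum_negf)
  finally show ?thesis .
qed

lemma sA_pred: "sA s N i (i - 1) = - s i"
  using index_mod_neq[of i] by (auto simp: sA_def dest: sym)

lemma sA_succ: "sA s N i (i + 1) = - s (i + 1)"
  using index_mod_neq[of "i + 1"] by (auto simp: sA_def dest: sym)

lemma sA_pred_succ:
  assumes "4 \<le> N"
  shows "sA s N (i - 1) (i + 1) = 0"
proof -
  have "(i - 1) mod int N \<noteq> (i + 1 + 1) mod int N"
    using mod_neq_if_close[of 3 "int N" "i - 1" "i + 1 + 1"] assms by simp
  then show ?thesis using index_mod_neq[of i] by (auto simp: sA_def dest: sym)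
qed

lemma spar_cases: "spar s i = 0 \<or> spar s i = 1"
  using sign[of i] sign[of "i + 1"] by (auto simp: spar_def)

lemma spar_isotropic: "sA s N i i = 0 \<Longrightarrow> spar s i = 1"
  using sign[of i] sign[of "i + 1"] by (auto simp: sA_diag spar_def)

lemma sA_around_isotropic:
  assumes "4 \<le> N" "sA s N i i = 0"
  shows "sA s N i (i - 1) = - s i" "sA s N (i - 1) i = - s i" "sA s N i (i + 1) = s i"
    "sA s N (i + 1) i = s i" "sA s N (i - 1) (i + 1) = 0" "sA s N (i + 1) (i - 1) = 0"
proof -
  have "s (i + 1) = - s i" using assms(2) by (simp add: sA_diag)
  then show "sA s N i (i - 1) = - s i" "sA s N (i - 1) i = - s i" "sA s N i (i + 1) = s i"
    "sA s N (i + 1) i = s i" "sA s N (i - 1) (i + 1) = 0" "sA s N (i + 1) (i - 1) = 0"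
    using sA_pred[of i] sA_succ[of i] sA_pred_succ[OF assms(1), of i] sA_sym by auto
qed

lemma constant_if_card:
  assumes "N = 3" and card: "card {i \<in> {1..int N}. s i = 1} \<in> {0, 3}"
  shows "s (i + 1) = s i"
proof -
  obtain c where c: "\<forall>k\<in>{1..3}. s k = c"
  proof (cases "card {i \<in> {1..int N}. s i = 1} = 0")
    case True
    moreover have "finite {i \<in> {1..int N}. s i = 1}" by (rule finite_subset[of _ "{1..int N}"]) auto
    ultimately have "{i \<in> {1..int N}. s i = 1} = {}" by simp
    then show ?thesis using that[of "-1"] sign assms(1) by fastforce
  next
    case False
    then have "card {i \<in> {1..int N}. s i = 1} = card {1..int N}" using card assms(1) by simp
    then have "{i \<in> {1..int N}. s i = 1} = {1..int N}"
      by (intro card_subset_eq) auto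
    then show ?thesis using that[of 1] assms(1) by auto
  qed
  have "s j = c" for j
    using c s_mod_cong[of j "(j - 1) mod 3 + 1"] assms(1) by (simp add: mod_add_left_eq)
  then show ?thesis by simp
qed

end

lemma bform_uminus_left: "bform s N (\<lambda>k. - x k) y = - bform s N x y"
  by (simp add: bform_def sum_negf)

lemma bform_uminus_right: "bform s N x (\<lambda>k. - y k) = - bform s N x y"
  by (simp add: bform_def sum_negf)

lemma bform_add_left: "bform s N (\<lambda>k. x k + y k) z = bform s N x z + bform s N y z"
  by (simp add: bform_def algebra_simps sum.distrib)

lemma bform_add_right: "bform s N x (\<lambda>k. y k + z k) = bform s N x y + bform s N x z"
  by (simp add: bform_def algebra_simps sum.distrib)

lemma qbr_triple:
  "qbr s N q (x, px, wx) (y, py, wy)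
    = (scomm (sgn2 px py * q powi bform s N wx wy) x y, px + py, \<lambda>k. wx k + wy k)"
  by (simp add: qbr_def scomm_def)

section \<open>The defining relations at arbitrary indices\<close>

lemma Ec_mod: "Ec N (i mod int N) = Ec N i" by (simp add: Ec_def fun_eq_iff)
lemma Fc_mod: "Fc N (i mod int N) = Fc N i" by (simp add: Fc_def fun_eq_iff)
lemma Kc_mod: "Kc N (i mod int N) = Kc N i" by (simp add: Kc_def)
lemma Kic_mod: "Kic N (i mod int N) = Kic N i" by (simp add: Kic_def)
lemma Kplus_mod: "Kplus q N (i mod int N) = Kplus q N i" by (simp add: Kplus_def fun_eq_iff)
lemma Kminus_mod: "Kminus q N (i mod int N) = Kminus q N i" by (simp add: Kminus_def fun_eq_iff)

lemma finite_fsupp_Ec [simp]: "finite (fsupp (Ec N i a))" by (simp add: Ec_def)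
lemma finite_fsupp_Fc [simp]: "finite (fsupp (Fc N i a))" by (simp add: Fc_def)
lemma finite_fsupp_Kc [simp]: "finite (fsupp (Kc N i))" by (simp add: Kc_def)
lemma finite_fsupp_Kic [simp]: "finite (fsupp (Kic N i))" by (simp add: Kic_def)

lemma finite_fsupp_Kplus [simp]: "finite (fsupp (Kplus q N i t))"
  unfolding Kplus_def by (auto intro!: finite_fsupp_fmul finite_fsupp_expc)

lemma finite_fsupp_Kminus [simp]: "finite (fsupp (Kminus q N i t))"
  unfolding Kminus_def by (auto intro!: finite_fsupp_fmul finite_fsupp_expc)

definition serre_rel_mn2 ::
    "(int \<Rightarrow> int) \<Rightarrow> nat \<Rightarrow> complex \<Rightarrow> (int \<Rightarrow> int \<Rightarrow> hel) \<Rightarrow> int \<Rightarrow> int \<Rightarrow> int \<Rightarrow> int \<Rightarrow> int \<Rightarrow> int \<Rightarrow> fa"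
  where "serre_rel_mn2 s N q G i c a1 a2 b1 b2 = fsub
    (fsuml (\<lambda>(x1, x2, y1, y2). fst (qbr s N q (G (i - 1) x1) (qbr s N q (G (i + 1) y1)
        (qbr s N q (G (i - 1) x2) (qbr s N q (G (i + 1) y2) (G i c))))))
      [(a1, a2, b1, b2), (a2, a1, b1, b2), (a1, a2, b2, b1), (a2, a1, b2, b1)])
    (fsuml (\<lambda>(x1, x2, y1, y2). fst (qbr s N q (G (i + 1) y1) (qbr s N q (G (i - 1) x1)
        (qbr s N q (G (i + 1) y2) (qbr s N q (G (i - 1) x2) (G i c))))))
      [(a1, a2, b1, b2), (a2, a1, b1, b2), (a1, a2, b2, b1), (a2, a1, b2, b1)])"

context parity_seq
begin

lemma index_mod_mem: "i mod int N \<in> {0..<int N}"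
  using N_pos by simp

lemma sA_mod: "sA s N (i mod int N) (j mod int N) = sA s N i j"
  by (rule sA_cong) simp_all

lemma sM_mod: "sM s N (i mod int N) (j mod int N) = sM s N i j"
  by (rule sM_cong) simp_all

lemma spar_mod: "spar s (i mod int N) = spar s i"
  by (rule spar_cong) simp

lemma qE_mod_add: "qE s N (i mod int N + e) = qE s N (i + e)"
  using spar_cong[of "i mod int N + e" "i + e"] by (simp add: qE_def fun_eq_iff mod_add_left_eq)

lemma qF_mod_add: "qF s N (i mod int N + e) = qF s N (i + e)"
  using spar_cong[of "i mod int N + e" "i + e"] by (simp add: qF_def fun_eq_iff mod_add_left_eq)

lemma series_mod_add:
  "G = qE s N \<or> G = qF s N \<Longrightarrow> G (i mod int N + e) = G (i + e)"
  "G = qE s N \<or> G = qF s N \<Longrightarrow> G (i mod int N) = G i"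
  "G = qE s N \<or> G = qF s N \<Longrightarrow> G (i mod int N - 1) = G (i - 1)"
  using qE_mod_add[of i e] qF_mod_add[of i e] qE_mod_add[of i 0] qF_mod_add[of i 0]
    qE_mod_add[of i "-1"] qF_mod_add[of i "-1"] by auto

lemmas index_mod_simps = sA_mod sM_mod spar_mod Ec_mod Fc_mod Kc_mod Kic_mod Kplus_mod Kminus_mod

lemma rels_K_Kinv: "fsub (fmul (Kc N i) (Kic N i)) fone \<in> rels s N m n d q"
proof -
  have "fsub (fmul (Kc N (i mod int N)) (Kic N (i mod int N))) fone \<in> rels s N m n d q"
    unfolding rels_def Let_def by (intro UnI1 UnI2) (use index_mod_mem in blast)
  then show ?thesis by (simp add: index_mod_simps)
qed

lemma rels_Kinv_K: "fsub (fmul (Kic N i) (Kc N i)) fone \<in> rels s N m n d q"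
proof -
  have "fsub (fmul (Kic N (i mod int N)) (Kc N (i mod int N))) fone \<in> rels s N m n d q"
    unfolding rels_def Let_def by (intro UnI1 UnI2) (use index_mod_mem in blast)
  then show ?thesis by (simp add: index_mod_simps)
qed

lemma rels_K_K: "fsub (fmul (Kc N i) (Kc N j)) (fmul (Kc N j) (Kc N i)) \<in> rels s N m n d q"
proof -
  have "fsub (fmul (Kc N (i mod int N)) (Kc N (j mod int N)))
      (fmul (Kc N (j mod int N)) (Kc N (i mod int N)))
      \<in> rels s N m n d q"
    unfolding rels_def Let_def by (intro UnI1 UnI2) (use index_mod_mem in blast)
  then show ?thesis by (simp add: index_mod_simps)
qed

lemma rels_K_E:
  "fsub (fmul (Kc N i) (fmul (Ec N j a) (Kic N i))) (fsmul (q powi sA s N i j) (Ec N j a))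
    \<in> rels s N m n d q"
proof -
  have "fsub (fmul (Kc N (i mod int N)) (fmul (Ec N (j mod int N) a) (Kic N (i mod int N))))
      (fsmul (q powi sA s N (i mod int N) (j mod int N)) (Ec N (j mod int N) a)) \<in> rels s N m n d q"
    unfolding rels_def Let_def by (intro UnI1 UnI2) (use index_mod_mem in blast)
  then show ?thesis by (simp add: index_mod_simps)
qed

lemma rels_K_F:
  "fsub (fmul (Kc N i) (fmul (Fc N j a) (Kic N i))) (fsmul (q powi (- sA s N i j)) (Fc N j a))
    \<in> rels s N m n d q"
proof -
  have "fsub (fmul (Kc N (i mod int N)) (fmul (Fc N (j mod int N) a) (Kic N (i mod int N))))
      (fsmul (q powi (- sA s N (i mod int N) (j mod int N))) (Fc N (j mod int N) a))
          \<in> rels s N m n d q"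
    unfolding rels_def Let_def by (intro UnI1 UnI2) (use index_mod_mem in blast)
  then show ?thesis by (simp add: index_mod_simps)
qed

lemma rels_Kplus_Kplus:
  "fsub (fmul (Kplus q N i a) (Kplus q N j b)) (fmul (Kplus q N j b) (Kplus q N i a))
      \<in> rels s N m n d q"
proof -
  have "fsub (fmul (Kplus q N (i mod int N) a) (Kplus q N (j mod int N) b))
      (fmul (Kplus q N (j mod int N) b) (Kplus q N (i mod int N) a)) \<in> rels s N m n d q"
    unfolding rels_def Let_def by (intro UnI1 UnI2) (use index_mod_mem in blast)
  then show ?thesis by (simp add: index_mod_simps)
qed

lemma rels_Kminus_Kminus:
  "fsub (fmul (Kminus q N i a) (Kminus q N j b)) (fmul (Kminus q N j b) (Kminus q N i a))
      \<in> rels s N m n d q"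
proof -
  have "fsub (fmul (Kminus q N (i mod int N) a) (Kminus q N (j mod int N) b))
      (fmul (Kminus q N (j mod int N) b) (Kminus q N (i mod int N) a)) \<in> rels s N m n d q"
    unfolding rels_def Let_def by (intro UnI1 UnI2) (use index_mod_mem in blast)
  then show ?thesis by (simp add: index_mod_simps)
qed

lemma rels_Kminus_Kplus:
  "fsub (fmul (Kminus q N i a) (Kplus q N j b)) (fmul (Kplus q N j b) (Kminus q N i a))
      \<in> rels s N m n d q"
proof -
  have "fsub (fmul (Kminus q N (i mod int N) a) (Kplus q N (j mod int N) b))
      (fmul (Kplus q N (j mod int N) b) (Kminus q N (i mod int N) a)) \<in> rels s N m n d q"
    unfolding rels_def Let_def by (intro UnI1 UnI2) (use index_mod_mem in blast)
  then show ?thesis by (simp add: index_mod_simps)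
qed

lemma rels_Kseries_E:
  assumes "KX = Kplus q N \<or> KX = Kminus q N"
  shows "rel3 (d powi sM s N i j) (q powi sA s N i j) (d powi sM s N i j * q powi sA s N i j) 1 1
      (KX i) (Ec N j) a b \<in> rels s N m n d q"
proof -
  have "rel3 (d powi sM s N (i mod int N) (j mod int N)) (q powi sA s N (i mod int N) (j mod int N))
      (d powi sM s N (i mod int N) (j mod int N) * q powi sA s N (i mod int N) (j mod int N)) 1 1
      (KX (i mod int N)) (Ec N (j mod int N)) a b \<in> rels s N m n d q"
    unfolding rels_def Let_def by (intro UnI1 UnI2) (use index_mod_mem assms in blast)
  moreover have "KX (i mod int N) = KX i" using assms by (auto simp: index_mod_simps)
  ultimately show ?thesis by (simp add: index_mod_simps)
qed

lemma rels_Kseries_F: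
  assumes "KX = Kplus q N \<or> KX = Kminus q N"
  shows "rel3 (d powi sM s N i j) (q powi (- sA s N i j))
      (d powi sM s N i j * q powi (- sA s N i j)) 1 1
      (KX i) (Fc N j) a b \<in> rels s N m n d q"
proof -
  have "rel3 (d powi sM s N (i mod int N) (j mod int N))
      (q powi (- sA s N (i mod int N) (j mod int N)))
      (d powi sM s N (i mod int N) (j mod int N) * q powi
          (- sA s N (i mod int N) (j mod int N))) 1 1
      (KX (i mod int N)) (Fc N (j mod int N)) a b \<in> rels s N m n d q"
    unfolding rels_def Let_def by (intro UnI1 UnI2) (use index_mod_mem assms in blast)
  moreover have "KX (i mod int N) = KX i" using assms by (auto simp: index_mod_simps)
  ultimately show ?thesis by (simp add: index_mod_simps)
qed

lemma rels_E_F: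
  "fsub (scomm (sgn2 (spar s i) (spar s j)) (Ec N i a) (Fc N j b))
      (fsmul ((if i mod int N = j mod int N then 1 else 0) / (q - inverse q))
        (fsub (Kplus q N i (a + b)) (Kminus q N i (a + b)))) \<in> rels s N m n d q"
proof -
  have "fsub (scomm (sgn2 (spar s (i mod int N)) (spar s (j mod int N))) (Ec N (i mod int N) a)
      (Fc N (j mod int N) b))
      (fsmul ((if i mod int N = j mod int N then 1 else 0) / (q - inverse q))
        (fsub (Kplus q N (i mod int N) (a + b)) (Kminus q N (i mod int N) (a + b))))
            \<in> rels s N m n d q"
    unfolding rels_def Let_def by (intro UnI1 UnI2) (use index_mod_mem in blast)
  then show ?thesis by (simp add: index_mod_simps)
qed

lemma rels_E_E_comm:
  "sA s N i j = 0 \<Longrightarrow> scomm (sgn2 (spar s i) (spar s j)) (Ec N i a) (Ec N j b) \<in> rels s N m n d q"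
proof -
  assume "sA s N i j = 0"
  then have "sA s N (i mod int N) (j mod int N) = 0" by (simp add: sA_mod)
  then have "scomm (sgn2 (spar s (i mod int N)) (spar s (j mod int N))) (Ec N (i mod int N) a)
      (Ec N (j mod int N) b)
      \<in> rels s N m n d q"
    unfolding rels_def Let_def by (intro UnI1 UnI2) (use index_mod_mem in blast)
  then show ?thesis by (simp add: index_mod_simps)
qed

lemma rels_F_F_comm:
  "sA s N i j = 0 \<Longrightarrow> scomm (sgn2 (spar s i) (spar s j)) (Fc N i a) (Fc N j b) \<in> rels s N m n d q"
proof -
  assume "sA s N i j = 0"
  then have "sA s N (i mod int N) (j mod int N) = 0" by (simp add: sA_mod)
  then have "scomm (sgn2 (spar s (i mod int N)) (spar s (j mod int N))) (Fc N (i mod int N) a)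
      (Fc N (j mod int N) b)
      \<in> rels s N m n d q"
    unfolding rels_def Let_def by (intro UnI1 UnI2) (use index_mod_mem in blast)
  then show ?thesis by (simp add: index_mod_simps)
qed

lemma rels_E_E:
  "sA s N i j \<noteq> 0 \<Longrightarrow> rel3 (d powi sM s N i j) (q powi sA s N i j)
      (d powi sM s N i j * q powi sA s N i j) 1
      (sgn2 (spar s i) (spar s j)) (Ec N i) (Ec N j) a b \<in> rels s N m n d q"
proof -
  assume "sA s N i j \<noteq> 0"
  then have "sA s N (i mod int N) (j mod int N) \<noteq> 0" by (simp add: sA_mod)
  then have "rel3 (d powi sM s N (i mod int N) (j mod int N))
      (q powi sA s N (i mod int N) (j mod int N))
      (d powi sM s N (i mod int N) (j mod int N) * q powi sA s N (i mod int N) (j mod int N)) 1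
      (sgn2 (spar s (i mod int N)) (spar s (j mod int N))) (Ec N (i mod int N))
          (Ec N (j mod int N)) a b
      \<in> rels s N m n d q"
    unfolding rels_def Let_def by (intro UnI1 UnI2) (use index_mod_mem in blast)
  then show ?thesis by (simp add: index_mod_simps)
qed

lemma rels_F_F:
  "sA s N i j \<noteq> 0 \<Longrightarrow> rel3 (d powi sM s N i j) (q powi (- sA s N i j))
      (d powi sM s N i j * q powi (- sA s N i j)) 1
      (sgn2 (spar s i) (spar s j)) (Fc N i) (Fc N j) a b \<in> rels s N m n d q"
proof -
  assume "sA s N i j \<noteq> 0"
  then have "sA s N (i mod int N) (j mod int N) \<noteq> 0" by (simp add: sA_mod)
  then have "rel3 (d powi sM s N (i mod int N) (j mod int N))
      (q powi (- sA s N (i mod int N) (j mod int N)))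
      (d powi sM s N (i mod int N) (j mod int N) * q powi (- sA s N (i mod int N) (j mod int N))) 1
      (sgn2 (spar s (i mod int N)) (spar s (j mod int N))) (Fc N (i mod int N))
          (Fc N (j mod int N)) a b
      \<in> rels s N m n d q"
    unfolding rels_def Let_def by (intro UnI1 UnI2) (use index_mod_mem in blast)
  then show ?thesis by (simp add: index_mod_simps)
qed

lemma rels_serre:
  assumes "sA s N i i \<noteq> 0" "e = 1 \<or> e = -1" and G: "G = qE s N \<or> G = qF s N"
  shows "fadd (fst (qbr s N q (G i a) (qbr s N q (G i b) (G (i + e) c))))
      (fst (qbr s N q (G i b) (qbr s N q (G i a) (G (i + e) c)))) \<in> rels s N m n d q"
proof -
  have "sA s N (i mod int N) (i mod int N) \<noteq> 0" using assms(1) by (simp add: sA_mod)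
  then have "fadd
      (fst (qbr s N q (G (i mod int N) a) (qbr s N q (G (i mod int N) b) (G (i mod int N + e) c))))
      (fst (qbr s N q (G (i mod int N) b) (qbr s N q (G (i mod int N) a) (G (i mod int N + e) c))))
      \<in> rels s N m n d q"
    unfolding rels_def Let_def by (intro UnI1 UnI2) (use index_mod_mem assms in blast)
  then show ?thesis by (simp add: series_mod_add[OF G])
qed

lemma rels_serre_odd:
  assumes "m * n \<noteq> 2" "sA s N i i = 0" and G: "G = qE s N \<or> G = qF s N"
  shows "fadd
      (fst (qbr s N q (G i a) (qbr s N q (G (i + 1) c1) (qbr s N q (G i b) (G (i - 1) c2)))))
      (fst (qbr s N q (G i b) (qbr s N q (G (i + 1) c1) (qbr s N q (G i a) (G (i - 1) c2)))))
      \<in> rels s N m n d q"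
proof -
  have "sA s N (i mod int N) (i mod int N) = 0" using assms(2) by (simp add: sA_mod)
  then have "fadd (fst (qbr s N q (G (i mod int N) a) (qbr s N q (G (i mod int N + 1) c1)
        (qbr s N q (G (i mod int N) b) (G (i mod int N - 1) c2)))))
      (fst (qbr s N q (G (i mod int N) b) (qbr s N q (G (i mod int N + 1) c1)
        (qbr s N q (G (i mod int N) a) (G (i mod int N - 1) c2))))) \<in> rels s N m n d q"
    unfolding rels_def Let_def by (intro UnI1 UnI2) (use index_mod_mem assms in blast)
  then show ?thesis by (simp add: series_mod_add[OF G])
qed

lemma rels_serre_mn2:
  assumes "m * n = 2" "sA s N i i \<noteq> 0" and G: "G = qE s N \<or> G = qF s N"
  shows "serre_rel_mn2 s N q G i c a1 a2 b1 b2 \<in> rels s N m n d q"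
proof -
  have "sA s N (i mod int N) (i mod int N) \<noteq> 0" using assms(2) by (simp add: sA_mod)
  then have "serre_rel_mn2 s N q G (i mod int N) c a1 a2 b1 b2 \<in> rels s N m n d q"
    unfolding serre_rel_mn2_def rels_def Let_def
    by (intro UnI1 UnI2) (use index_mod_mem assms in blast)
  then show ?thesis by (simp add: serre_rel_mn2_def series_mod_add[OF G])
qed

end

lemma finite_fsupp_rels: "r \<in> rels s N m n d q \<Longrightarrow> finite (fsupp r)"
proof -
  have [simp]: "finite (fsupp (fst (qbr s N q X Y)))"
    if "finite (fsupp (fst X))" "finite (fsupp (fst Y))" for q X Y
    using that by (cases X, cases Y) (simp add: qbr_def)
  have [simp]: "finite (fsupp (fst (qE s N i a)))" "finite (fsupp (fst (qF s N i a)))" for i a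
    by (simp_all add: qE_def qF_def)
  show "r \<in> rels s N m n d q \<Longrightarrow> finite (fsupp r)"
    unfolding rels_def Let_def
    by (elim UnE CollectE exE conjE disjE) (simp_all add: rel3_def scomm_def)
qed

context parity_seq
begin

lemma series_components:
  assumes "G = qE s N \<or> G = qF s N"
  obtains L w where "\<And>j x. G j x = (L j x, spar s j, w j)"
    "\<And>j k. bform s N (w j) (w k) = sA s N j k"
    "\<And>j x. fpoly N (L j x)"
    "\<And>j k x y. sA s N j k = 0 \<Longrightarrow> scomm (sgn2 (spar s j) (spar s k)) (L j x) (L k y)
        \<in> rels s N m n d q"
proof (cases "G = qE s N")
  case True
  show ?thesis
  proof (rule that[of "Ec N" "\<lambda>j. unitw (j mod int N)"])
    show "G j x = (Ec N j x, spar s j, unitw (j mod int N))" for j x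
      using True by (simp add: qE_def Ec_def)
    show "fpoly N (Ec N j x)" for j x
      unfolding Ec_def by (rule fpoly_fgen) (simp add: valid_gen_def N_pos)
  qed (simp_all add: bform_unitw rels_E_E_comm)
next
  case False
  then have "G = qF s N" using assms by simp
  show ?thesis
  proof (rule that[of "Fc N" "\<lambda>j k. - unitw (j mod int N) k"])
    show "G j x = (Fc N j x, spar s j, \<lambda>k. - unitw (j mod int N) k)" for j x
      using \<open>G = qF s N\<close> by (simp add: qF_def Fc_def)
    show "fpoly N (Fc N j x)" for j x
      unfolding Fc_def by (rule fpoly_fgen) (simp add: valid_gen_def N_pos)
  qed (simp_all add: bform_uminus_left bform_uminus_right bform_unitw rels_F_F_comm)
qed

text \<open>For \<open>A\<^sub>i\<^sub>i = 0\<close> the generators at \<open>i\<close> are odd and anticommute, while those at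
  \<open>i \<pm> 1\<close> commute up to sign as soon as \<open>N \<ge> 4\<close>.\<close>
lemma serre_odd_swapped:
  assumes "4 \<le> N" "q \<noteq> 0" "m * n \<noteq> 2" and A: "sA s N i i = 0" and G: "G = qE s N \<or> G = qF s N"
  shows "fadd
      (fst (qbr s N q (G i a) (qbr s N q (G (i - 1) c1) (qbr s N q (G i b) (G (i + 1) c2)))))
      (fst (qbr s N q (G i b) (qbr s N q (G (i - 1) c1) (qbr s N q (G i a) (G (i + 1) c2)))))
    \<in> tsideal N (rels s N m n d q)"
proof -
  obtain L w where Gc: "\<And>j x. G j x = (L j x, spar s j, w j)"
    and bf: "\<And>j k. bform s N (w j) (w k) = sA s N j k"
    and pf: "\<And>j x. fpoly N (L j x)"
    and comm: "\<And>j k x y. sA s N j k = 0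
      \<Longrightarrow> scomm (sgn2 (spar s j) (spar s k)) (L j x) (L k y) \<in> rels s N m n d q"
    using series_components[OF G] by metis
  note sA_vals = sA_around_isotropic[OF assms(1) A]
  have R: "fadd
      (fst (qbr s N q (G i a) (qbr s N q (G (i + 1) c2) (qbr s N q (G i b) (G (i - 1) c1)))))
      (fst (qbr s N q (G i b) (qbr s N q (G (i + 1) c2) (qbr s N q (G i a) (G (i - 1) c1)))))
    \<in> tsideal N (rels s N m n d q)"
    by (rule tsideal_rel[OF rels_serre_odd[OF assms(3) A G]])
  have anti: "scomm (-1) (L i a) (L i b) \<in> rels s N m n d q"
    using comm[OF A, of a b] spar_isotropic[OF A] by (simp add: sgn2_def)
  have nb_comm: "scomm (sgn2 (spar s (i - 1)) (spar s (i + 1))) (L (i - 1) c1) (L (i + 1) c2)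
      \<in> rels s N m n d q"
    using comm[OF sA_vals(5)] .
  show ?thesis
    unfolding Gc qbr_triple fst_conv
    apply (rule tsideal_scomm_nested_swap[OF R[unfolded Gc qbr_triple fst_conv] anti nb_comm pf
        pf pf pf])
     apply (simp_all add: bform_add_left bform_add_right bf sA_vals A spar_isotropic[OF A])
    using spar_cases[of "i - 1"] spar_cases[of "i + 1"] sign[of i] assms(2)
    by (auto simp: sgn2_def power_int_minus field_simps)
qed

end

section \<open>The reflection map on the free algebra\<close>

fun reflect_gen :: "nat \<Rightarrow> gen \<Rightarrow> gen" where
  "reflect_gen N (GE i r) = GE ((- i) mod int N) r"
| "reflect_gen N (GF i r) = GF ((- i) mod int N) r"
| "reflect_gen N (GH i r) = GH ((- i) mod int N) r"
| "reflect_gen N (GK i) = GK ((- i) mod int N)"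
| "reflect_gen N (GKi i) = GKi ((- i) mod int N)"

text \<open>The sign of \<open>H\<close> compensates \<open>q - q\<^sup>-\<^sup>1 \<mapsto> q\<^sup>-\<^sup>1 - q\<close> inside \<open>K\<^sup>\<pm>(z)\<close>.\<close>
fun gen_sign :: "gen \<Rightarrow> complex" where
  "gen_sign (GF i r) = -1"
| "gen_sign (GH i r) = -1"
| "gen_sign _ = 1"

definition tau :: "nat \<Rightarrow> gen \<Rightarrow> fa" where
  "tau N g = fsmul (gen_sign g) (fgen (reflect_gen N g))"

lemma finite_fsupp_tau [simp]: "finite (fsupp (tau N g))"
  by (simp add: tau_def)

lemma valid_gen_reflect_gen: "0 < N \<Longrightarrow> valid_gen N g \<Longrightarrow> valid_gen N (reflect_gen N g)"
  by (cases g) (auto simp: valid_gen_def)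

lemma fpoly_tau: "0 < N \<Longrightarrow> valid_gen N g \<Longrightarrow> fpoly N (tau N g)"
  unfolding tau_def by (intro fpoly_fsmul fpoly_fgen valid_gen_reflect_gen)

lemma reflect_gen_reflect_gen: "0 < N \<Longrightarrow> valid_gen N g \<Longrightarrow> reflect_gen N (reflect_gen N g) = g"
  by (cases g) (auto simp: valid_gen_def mod_minus_eq)

lemma gen_sign_reflect_gen: "gen_sign (reflect_gen N g) = gen_sign g"
  by (cases g) simp_all

lemma gen_sign_square: "gen_sign g * gen_sign g = 1"
  by (cases g) simp_all

lemma fext_tau_tau_gen: "0 < N \<Longrightarrow> valid_gen N g \<Longrightarrow> fext (tau N) (tau N g) = fgen g"
  unfolding tau_def[of N g]
  by (simp add: fext_fsmul fext_fgen tau_def fsmul_fsmul gen_sign_reflect_gen gen_sign_square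
      reflect_gen_reflect_gen)

lemma fext_tau_tau:
  assumes "0 < N" "fpoly N x"
  shows "fext (tau N) (fext (tau N) x) = x"
proof -
  have "fext (tau N) (fext (tau N) x) = fext (\<lambda>g. fext (tau N) (tau N g)) x"
    using assms by (simp add: fext_fext fpoly_finite_fsupp)
  also have "\<dots> = x"
    using assms by (intro fext_eq_self) (auto simp: fpoly_iff fext_tau_tau_gen)
  finally show ?thesis .
qed

lemma homog_tau:
  assumes "parity_seq s N"
  shows "homog (sneg s) (gpar s g) (tau N g)"
  unfolding homog_def
proof (intro allI impI)
  interpret r: parity_seq "sneg s" N by (rule parity_seq.parity_seq_sneg[OF assms])
  fix w assume "tau N g w \<noteq> 0"
  then have w: "w = [reflect_gen N g]" by (simp add: tau_def fa_apply split: if_splits)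
  have "spar (sneg s) ((- i) mod int N) = spar s i" for i
    using r.spar_cong[of "(- i) mod int N" "- i"] spar_sneg[of s i] by simp
  then have "gpar (sneg s) (reflect_gen N g) = gpar s g"
    by (cases g) (simp_all add: gpar_def)
  then show "wpar (sneg s) w = gpar s g mod 2" by (simp add: w wpar_def)
qed

lemma fext_tau_Ec: "fext (tau N) (Ec N i a) = Ec N (- i) a"
  by (simp add: Ec_def fext_fgen tau_def mod_minus_eq)

lemma fext_tau_Fc: "fext (tau N) (Fc N i a) = fsmul (-1) (Fc N (- i) a)"
  by (simp add: Fc_def fext_fgen tau_def mod_minus_eq)

lemma fext_tau_Kc: "fext (tau N) (Kc N i) = Kc N (- i)"
  by (simp add: Kc_def fext_fgen tau_def mod_minus_eq)

lemma fext_tau_Kic: "fext (tau N) (Kic N i) = Kic N (- i)"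
  by (simp add: Kic_def fext_fgen tau_def mod_minus_eq)

lemma fext_tau_Kplus: "fext (tau N) (Kplus q N i t) = Kplus (inverse q) N (- i) t"
proof (cases "t < 0")
  case False
  have "(\<lambda>r. fext (tau N) (fsmul (q - inverse q) (fgen (GH (i mod int N) (int r)))))
      = (\<lambda>r. fsmul (inverse q - inverse (inverse q)) (fgen (GH ((- i) mod int N) (int r))))"
    by (simp add: fext_fsmul fext_fgen tau_def fsmul_fsmul mod_minus_eq algebra_simps)
  then show ?thesis
    using False unfolding Kplus_def
    by (simp add: fext_fmul finite_fsupp_expc fext_expc fext_fgen tau_def mod_minus_eq)
qed (simp add: Kplus_def)

lemma fext_tau_Kminus: "fext (tau N) (Kminus q N i t) = Kminus (inverse q) N (- i) t"
proof (cases "0 < t")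
  case False
  have "(\<lambda>r. fext (tau N) (fsmul (inverse q - q) (fgen (GH (i mod int N) (- int r)))))
      = (\<lambda>r. fsmul (q - inverse q) (fgen (GH ((- i) mod int N) (- int r))))"
    by (simp add: fext_fsmul fext_fgen tau_def fsmul_fsmul mod_minus_eq algebra_simps)
  then show ?thesis
    using False unfolding Kminus_def
    by (simp add: fext_fmul finite_fsupp_expc fext_expc fext_fgen tau_def mod_minus_eq)
qed (simp add: Kminus_def)

lemma inverse_powi: "inverse q powi k = q powi (- k)" for q :: complex
  by (simp add: power_int_inverse power_int_minus)

definition reflects :: "nat \<Rightarrow> complex \<Rightarrow> hel \<Rightarrow> hel \<Rightarrow> bool" where
  "reflects N \<sigma> X X' \<longleftrightarrow> fext (tau N) (fst X) = fsmul \<sigma> (fst X') \<and> finite (fsupp (fst X))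
    \<and> fst (snd X) = fst (snd X') \<and> reflected_weight N (snd (snd X)) (snd (snd X'))"

lemma reflects_fext_tau: "reflects N \<sigma> X X' \<Longrightarrow> fext (tau N) (fst X) = fsmul \<sigma> (fst X')"
  by (simp add: reflects_def)

lemma reflects_qE: "reflects N 1 (qE s N i a) (qE (sneg s) N (- i) a)"
  unfolding reflects_def qE_def
  by (simp add: fext_tau_Ec[unfolded Ec_def] spar_sneg reflected_weight_unitw)

lemma reflects_qF: "reflects N (-1) (qF s N i a) (qF (sneg s) N (- i) a)"
  unfolding reflects_def qF_def
  by (simp add: fext_tau_Fc[unfolded Fc_def] spar_sneg reflected_weight_unitw
      reflected_weight_uminus)

lemma reflects_series:
  assumes "G = qE s N \<or> G = qF s N"
  obtains \<sigma> G' where "G' = qE (sneg s) N \<or> G' = qF (sneg s) N"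
    "\<And>i a. reflects N \<sigma> (G i a) (G' (- i) a)"
  using assms reflects_qE reflects_qF by metis

lemma fext_tau_fadd_reflects:
  assumes "reflects N \<sigma> X X'" "reflects N \<sigma> Y Y'"
  shows "fext (tau N) (fadd (fst X) (fst Y)) = fsmul \<sigma> (fadd (fst X') (fst Y'))"
  using assms by (simp add: reflects_def fext_fadd) (rule ext, simp add: fa_apply algebra_simps)

context parity_seq
begin

text \<open>The reflection negates the bilinear form, which is matched by \<open>q \<mapsto> q\<^sup>-\<^sup>1\<close>.\<close>
lemma reflects_qbr:
  assumes X: "reflects N \<sigma> X X'" and Y: "reflects N \<rho> Y Y'"
  shows "reflects N (\<sigma> * \<rho>) (qbr s N q X Y) (qbr (sneg s) N (inverse q) X' Y')"
proof -
  obtain x px wx x' px' wx' y py wy y' py' wy' where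
    XY: "X = (x, px, wx)" "X' = (x', px', wx')" "Y = (y, py, wy)" "Y' = (y', py', wy')"
    by (metis prod.exhaust)
  have h: "fext (tau N) x = fsmul \<sigma> x'" "finite (fsupp x)" "px = px'" "reflected_weight N wx wx'"
    "fext (tau N) y = fsmul \<rho> y'" "finite (fsupp y)" "py = py'" "reflected_weight N wy wy'"
    using X Y XY by (simp_all add: reflects_def)
  have "fext (tau N) (fst (qbr s N q X Y)) = fsmul (\<sigma> * \<rho>) (fst (qbr (sneg s) N (inverse q) X' Y'))"
    unfolding XY qbr_def
    by (rule ext) (simp add: fext_fsub fext_fmul fext_fsmul h bform_sneg[OF h(4) h(8)] inverse_powi
        fmul_fsmul_left fmul_fsmul_right fa_apply algebra_simps)
  then show ?thesis
    using h XY by (simp add: reflects_def qbr_def reflected_weight_add)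
qed

end

section \<open>Images of the defining relations\<close>

context parity_seq
begin

abbreviation dual_ideal :: "nat \<Rightarrow> nat \<Rightarrow> complex \<Rightarrow> complex \<Rightarrow> fa set" where
  "dual_ideal m n d q \<equiv> tsideal N (rels (sneg s) N n m d (inverse q))"

lemma tau_rel_K_Kinv: "fext (tau N) (fsub (fmul (Kc N i) (Kic N i)) fone) \<in> dual_ideal m n d q"
  using tsideal_rel[OF parity_seq.rels_K_Kinv[OF parity_seq_sneg, of "- i"]]
  by (simp add: fext_fsub fext_fmul fext_fone fext_tau_Kc fext_tau_Kic)

lemma tau_rel_Kinv_K: "fext (tau N) (fsub (fmul (Kic N i) (Kc N i)) fone) \<in> dual_ideal m n d q"
  using tsideal_rel[OF parity_seq.rels_Kinv_K[OF parity_seq_sneg, of "- i"]]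
  by (simp add: fext_fsub fext_fmul fext_fone fext_tau_Kc fext_tau_Kic)

lemma tau_rel_K_K:
  "fext (tau N) (fsub (fmul (Kc N i) (Kc N j)) (fmul (Kc N j) (Kc N i))) \<in> dual_ideal m n d q"
  using tsideal_rel[OF parity_seq.rels_K_K[OF parity_seq_sneg, of "- i" "- j"]]
  by (simp add: fext_fsub fext_fmul fext_tau_Kc)

lemma tau_rel_K_E:
  "fext (tau N)
      (fsub (fmul (Kc N i) (fmul (Ec N j a) (Kic N i))) (fsmul (q powi sA s N i j) (Ec N j a)))
    \<in> dual_ideal m n d q"
  using tsideal_rel[OF parity_seq.rels_K_E[OF parity_seq_sneg, of "- i" "- j" a "inverse q"]]
  by (simp add: fext_fsub fext_fmul fext_fsmul fext_tau_Kc fext_tau_Kic fext_tau_Ec sA_sneg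
      inverse_powi)

lemma tau_rel_K_F:
  "fext (tau N)
      (fsub (fmul (Kc N i) (fmul (Fc N j a) (Kic N i))) (fsmul (q powi (- sA s N i j)) (Fc N j a)))
    \<in> dual_ideal m n d q"
proof -
  have "fext (tau N)
      (fsub (fmul (Kc N i) (fmul (Fc N j a) (Kic N i))) (fsmul (q powi (- sA s N i j)) (Fc N j a)))
    = fsmul (-1) (fsub (fmul (Kc N (- i)) (fmul (Fc N (- j) a) (Kic N (- i))))
        (fsmul (inverse q powi (- sA (sneg s) N (- i) (- j))) (Fc N (- j) a)))"
    by (rule ext) (simp add: fext_fsub fext_fmul fext_fsmul fext_tau_Kc fext_tau_Kic fext_tau_Fc
        sA_sneg inverse_powi fmul_fsmul_left fmul_fsmul_right fa_apply algebra_simps)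
  then show ?thesis
    using tsideal_fsmul_rel[OF parity_seq.rels_K_F[OF parity_seq_sneg]] by simp
qed

lemma tau_rel_Kplus_Kplus:
  "fext (tau N) (fsub (fmul (Kplus q N i a) (Kplus q N j b)) (fmul (Kplus q N j b) (Kplus q N i a)))
    \<in> dual_ideal m n d q"
  using tsideal_rel[OF parity_seq.rels_Kplus_Kplus[OF parity_seq_sneg, of "inverse q" "- i" a "-
      j" b]]
  by (simp add: fext_fsub fext_fmul fext_tau_Kplus)

lemma tau_rel_Kminus_Kminus:
  "fext (tau N)
      (fsub (fmul (Kminus q N i a) (Kminus q N j b)) (fmul (Kminus q N j b) (Kminus q N i a)))
    \<in> dual_ideal m n d q"
  using tsideal_rel[OF parity_seq.rels_Kminus_Kminus[OF parity_seq_sneg, of "inverse q" "- i" a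
      "- j" b]]
  by (simp add: fext_fsub fext_fmul fext_tau_Kminus)

lemma tau_rel_Kminus_Kplus:
  "fext (tau N)
      (fsub (fmul (Kminus q N i a) (Kplus q N j b)) (fmul (Kplus q N j b) (Kminus q N i a)))
    \<in> dual_ideal m n d q"
  using tsideal_rel[OF parity_seq.rels_Kminus_Kplus[OF parity_seq_sneg, of "inverse q" "- i" a
      "- j" b]]
  by (simp add: fext_fsub fext_fmul fext_tau_Kplus fext_tau_Kminus)

lemma tau_Kseries:
  assumes "KX = Kplus q N \<or> KX = Kminus q N"
  obtains KX' where "KX' = Kplus (inverse q) N \<or> KX' = Kminus (inverse q) N"
    "\<And>i a. fext (tau N) (KX i a) = KX' (- i) a" "\<And>i a. finite (fsupp (KX i a))"
  using assms fext_tau_Kplus fext_tau_Kminus by (metis finite_fsupp_Kplus finite_fsupp_Kminus)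

lemma tau_rel_Kseries_E:
  assumes "KX = Kplus q N \<or> KX = Kminus q N"
  shows "fext (tau N)
      (rel3 (d powi sM s N i j) (q powi sA s N i j) (d powi sM s N i j * q powi sA s N i j)
      1 1 (KX i) (Ec N j) a b) \<in> dual_ideal m n d q"
proof -
  obtain KX' where K': "KX' = Kplus (inverse q) N \<or> KX' = Kminus (inverse q) N"
    and img: "\<And>i a. fext (tau N) (KX i a) = KX' (- i) a" and fin: "\<And>i a. finite (fsupp (KX i a))"
    using tau_Kseries[OF assms] by metis
  have "fext (tau N)
      (rel3 (d powi sM s N i j) (q powi sA s N i j) (d powi sM s N i j * q powi sA s N i j)
      1 1 (KX i) (Ec N j) a b)
    = rel3 (d powi sM (sneg s) N (- i) (- j)) (inverse q powi sA (sneg s) N (- i) (- j))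
      (d powi sM (sneg s) N (- i) (- j) * inverse q powi sA (sneg s) N (- i) (- j)) 1 1
      (KX' (- i)) (Ec N (- j)) a b"
    unfolding rel3_def
    by (simp add: fext_fsub fext_fmul fext_fsmul fin img fext_tau_Ec sA_sneg sM_sneg inverse_powi)
  then show ?thesis using tsideal_rel[OF parity_seq.rels_Kseries_E[OF parity_seq_sneg K']] by simp
qed

lemma tau_rel_Kseries_F:
  assumes "KX = Kplus q N \<or> KX = Kminus q N"
  shows "fext (tau N) (rel3 (d powi sM s N i j) (q powi (- sA s N i j))
      (d powi sM s N i j * q powi (- sA s N i j)) 1 1 (KX i) (Fc N j) a b) \<in> dual_ideal m n d q"
proof -
  obtain KX' where K': "KX' = Kplus (inverse q) N \<or> KX' = Kminus (inverse q) N"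
    and img: "\<And>i a. fext (tau N) (KX i a) = KX' (- i) a" and fin: "\<And>i a. finite (fsupp (KX i a))"
    using tau_Kseries[OF assms] by metis
  have "fext (tau N) (rel3 (d powi sM s N i j) (q powi (- sA s N i j))
      (d powi sM s N i j * q powi (- sA s N i j)) 1 1 (KX i) (Fc N j) a b)
    = fsmul (-1)
        (rel3 (d powi sM (sneg s) N (- i) (- j)) (inverse q powi (- sA (sneg s) N (- i) (- j)))
      (d powi sM (sneg s) N (- i) (- j) * inverse q powi (- sA (sneg s) N (- i) (- j))) 1 1
      (KX' (- i)) (Fc N (- j)) a b)"
    unfolding rel3_def
    by (rule ext) (simp add: fext_fsub fext_fmul fext_fsmul fin img fext_tau_Fc sA_sneg sM_sneg
        inverse_powi fmul_fsmul_left fmul_fsmul_right fa_apply algebra_simps)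
  then show ?thesis using tsideal_fsmul_rel[OF parity_seq.rels_Kseries_F[OF parity_seq_sneg K']]
      by simp
qed

lemma tau_rel_E_F:
  assumes "i \<in> {0..<int N}" "j \<in> {0..<int N}"
  shows "fext (tau N) (fsub (scomm (sgn2 (spar s i) (spar s j)) (Ec N i a) (Fc N j b))
      (fsmul ((if i = j then 1 else 0) / (q - inverse q))
          (fsub (Kplus q N i (a + b)) (Kminus q N i (a + b)))))
    \<in> dual_ideal m n d q"
proof -
  have "((- i) mod int N = (- j) mod int N) = (i = j)"
    using assms by (simp add: mod_neg_eq_iff)
  then have "fext (tau N) (fsub (scomm (sgn2 (spar s i) (spar s j)) (Ec N i a) (Fc N j b))
      (fsmul ((if i = j then 1 else 0) / (q - inverse q))
          (fsub (Kplus q N i (a + b)) (Kminus q N i (a + b)))))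
    = fsmul (-1)
        (fsub (scomm (sgn2 (spar (sneg s) (- i)) (spar (sneg s) (- j))) (Ec N (- i) a)
            (Fc N (- j) b))
      (fsmul ((if (- i) mod int N = (- j) mod int N then 1 else 0) /
          (inverse q - inverse (inverse q)))
        (fsub (Kplus (inverse q) N (- i) (a + b)) (Kminus (inverse q) N (- i) (a + b)))))"
    unfolding scomm_def
    by (intro ext) (simp add: fext_fsub fext_fmul fext_fsmul fext_tau_Ec fext_tau_Fc fext_tau_Kplus
        fext_tau_Kminus spar_sneg fmul_fsmul_left fmul_fsmul_right fa_apply algebra_simps
        divide_simps)
  then show ?thesis by (simp only:)
      (rule tsideal_fsmul_rel[OF parity_seq.rels_E_F[OF parity_seq_sneg]])
qed

lemma tau_rel_E_E_comm:
  assumes "sA s N i j = 0"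
  shows "fext (tau N) (scomm (sgn2 (spar s i) (spar s j)) (Ec N i a) (Ec N j b))
      \<in> dual_ideal m n d q"
  using assms tsideal_rel[OF parity_seq.rels_E_E_comm[OF parity_seq_sneg, of "- i" "- j"]]
  by (simp add: scomm_def fext_fsub fext_fmul fext_fsmul fext_tau_Ec sA_sneg spar_sneg)

lemma tau_rel_F_F_comm:
  assumes "sA s N i j = 0"
  shows "fext (tau N) (scomm (sgn2 (spar s i) (spar s j)) (Fc N i a) (Fc N j b))
      \<in> dual_ideal m n d q"
proof -
  have "fext (tau N) (scomm (sgn2 (spar s i) (spar s j)) (Fc N i a) (Fc N j b))
    = scomm (sgn2 (spar (sneg s) (- i)) (spar (sneg s) (- j))) (Fc N (- i) a) (Fc N (- j) b)"
    unfolding scomm_def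
    by (rule ext) (simp add: fext_fsub fext_fmul fext_fsmul fext_tau_Fc spar_sneg
        fmul_fsmul_left fmul_fsmul_right fa_apply algebra_simps)
  then show ?thesis
    using assms tsideal_rel[OF parity_seq.rels_F_F_comm[OF parity_seq_sneg, of "- i" "- j"]]
    by (simp add: sA_sneg)
qed

lemma tau_rel_E_E:
  assumes "sA s N i j \<noteq> 0"
  shows "fext (tau N)
      (rel3 (d powi sM s N i j) (q powi sA s N i j) (d powi sM s N i j * q powi sA s N i j)
      1 (sgn2 (spar s i) (spar s j)) (Ec N i) (Ec N j) a b) \<in> dual_ideal m n d q"
proof -
  have "fext (tau N)
      (rel3 (d powi sM s N i j) (q powi sA s N i j) (d powi sM s N i j * q powi sA s N i j)
      1 (sgn2 (spar s i) (spar s j)) (Ec N i) (Ec N j) a b)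
    = rel3 (d powi sM (sneg s) N (- i) (- j)) (inverse q powi sA (sneg s) N (- i) (- j))
      (d powi sM (sneg s) N (- i) (- j) * inverse q powi sA (sneg s) N (- i) (- j)) 1
      (sgn2 (spar (sneg s) (- i)) (spar (sneg s) (- j))) (Ec N (- i)) (Ec N (- j)) a b"
    unfolding rel3_def
    by (simp add: fext_fsub fext_fmul fext_fsmul fext_tau_Ec sA_sneg sM_sneg inverse_powi spar_sneg)
  then show ?thesis
    using assms tsideal_rel[OF parity_seq.rels_E_E[OF parity_seq_sneg, of "- i" "- j"]]
    by (simp add: sA_sneg)
qed

lemma tau_rel_F_F:
  assumes "sA s N i j \<noteq> 0"
  shows "fext (tau N) (rel3 (d powi sM s N i j) (q powi (- sA s N i j))
      (d powi sM s N i j * q powi (- sA s N i j)) 1 (sgn2 (spar s i) (spar s j)) (Fc N i)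
          (Fc N j) a b)
    \<in> dual_ideal m n d q"
proof -
  have "fext (tau N) (rel3 (d powi sM s N i j) (q powi (- sA s N i j))
      (d powi sM s N i j * q powi (- sA s N i j)) 1 (sgn2 (spar s i) (spar s j)) (Fc N i)
          (Fc N j) a b)
    = rel3 (d powi sM (sneg s) N (- i) (- j)) (inverse q powi (- sA (sneg s) N (- i) (- j)))
      (d powi sM (sneg s) N (- i) (- j) * inverse q powi (- sA (sneg s) N (- i) (- j))) 1
      (sgn2 (spar (sneg s) (- i)) (spar (sneg s) (- j))) (Fc N (- i)) (Fc N (- j)) a b"
    unfolding rel3_def
    by (rule ext) (simp add: fext_fsub fext_fmul fext_fsmul fext_tau_Fc sA_sneg sM_sneg inverse_powi
        spar_sneg fmul_fsmul_left fmul_fsmul_right fa_apply algebra_simps)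
  then show ?thesis
    using assms tsideal_rel[OF parity_seq.rels_F_F[OF parity_seq_sneg, of "- i" "- j"]]
    by (simp add: sA_sneg)
qed

lemma tau_rel_serre:
  assumes A: "sA s N i i \<noteq> 0" and e: "e = 1 \<or> e = -1" and G: "G = qE s N \<or> G = qF s N"
  shows "fext (tau N) (fadd (fst (qbr s N q (G i a) (qbr s N q (G i b) (G (i + e) c))))
      (fst (qbr s N q (G i b) (qbr s N q (G i a) (G (i + e) c))))) \<in> dual_ideal m n d q"
proof -
  obtain \<sigma> G' where G': "G' = qE (sneg s) N \<or> G' = qF (sneg s) N"
    and h: "\<And>i a. reflects N \<sigma> (G i a) (G' (- i) a)"
    using reflects_series[OF G] by metis
  have he: "reflects N \<sigma> (G (i + e) c) (G' (- i + - e) c)" using h[of "i + e" c] by simp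
  note br = reflects_qbr[where q = q]
  have "fext (tau N) (fadd (fst (qbr s N q (G i a) (qbr s N q (G i b) (G (i + e) c))))
      (fst (qbr s N q (G i b) (qbr s N q (G i a) (G (i + e) c)))))
    = fsmul (\<sigma> * (\<sigma> * \<sigma>))
      (fadd (fst (qbr (sneg s) N (inverse q) (G' (- i) a)
          (qbr (sneg s) N (inverse q) (G' (- i) b) (G' (- i + - e) c))))
        (fst (qbr (sneg s) N (inverse q) (G' (- i) b)
            (qbr (sneg s) N (inverse q) (G' (- i) a) (G' (- i + - e) c)))))"
    by (rule fext_tau_fadd_reflects[OF br[OF h br[OF h he]] br[OF h br[OF h he]]])
  moreover have "sA (sneg s) N (- i) (- i) \<noteq> 0" using A by (simp add: sA_sneg)
  moreover have "- e = 1 \<or> - e = -1" using e by auto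
  ultimately show ?thesis
    by (simp only:) (rule tsideal_fsmul_rel[OF parity_seq.rels_serre[OF parity_seq_sneg _ _ G']])
qed

text \<open>The reflection exchanges \<open>i + 1\<close> and \<open>i - 1\<close>, so the image is a relation only up to
  \<open>serre_odd_swapped\<close>.\<close>
lemma tau_rel_serre_odd:
  assumes "4 \<le> N" "q \<noteq> 0" "m * n \<noteq> 2" and A: "sA s N i i = 0" and G: "G = qE s N \<or> G = qF s N"
  shows "fext (tau N)
      (fadd (fst (qbr s N q (G i a) (qbr s N q (G (i + 1) c1) (qbr s N q (G i b) (G (i - 1) c2)))))
      (fst (qbr s N q (G i b) (qbr s N q (G (i + 1) c1) (qbr s N q (G i a) (G (i - 1) c2))))))
    \<in> dual_ideal m n d q"
proof -
  obtain \<sigma> G' where G': "G' = qE (sneg s) N \<or> G' = qF (sneg s) N"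
    and h: "\<And>i a. reflects N \<sigma> (G i a) (G' (- i) a)"
    using reflects_series[OF G] by metis
  have hp: "reflects N \<sigma> (G (i + 1) x) (G' (- i - 1) x)"
    and hm: "reflects N \<sigma> (G (i - 1) x) (G' (- i + 1) x)" for x
    using h[of "i + 1" x] h[of "i - 1" x] by simp_all
  note br = reflects_qbr[where q = q]
  have "fext (tau N)
      (fadd (fst (qbr s N q (G i a) (qbr s N q (G (i + 1) c1) (qbr s N q (G i b) (G (i - 1) c2)))))
      (fst (qbr s N q (G i b) (qbr s N q (G (i + 1) c1) (qbr s N q (G i a) (G (i - 1) c2))))))
    = fsmul (\<sigma> * (\<sigma> * (\<sigma> * \<sigma>)))
      (fadd (fst (qbr (sneg s) N (inverse q) (G' (- i) a)
          (qbr (sneg s) N (inverse q) (G' (- i - 1) c1)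
          (qbr (sneg s) N (inverse q) (G' (- i) b) (G' (- i + 1) c2)))))
        (fst (qbr (sneg s) N (inverse q) (G' (- i) b) (qbr (sneg s) N (inverse q) (G' (- i - 1) c1)
          (qbr (sneg s) N (inverse q) (G' (- i) a) (G' (- i + 1) c2))))))"
    by (rule fext_tau_fadd_reflects[OF br[OF h br[OF hp br[OF h hm]]] br[OF h br[OF hp br[OF h
        hm]]]])
  moreover have "sA (sneg s) N (- i) (- i) = 0" using A by (simp add: sA_sneg)
  ultimately show ?thesis
    using assms(1-3) by (simp only:) (rule tsideal_fsmul[OF
        parity_seq.serre_odd_swapped[OF parity_seq_sneg _ _ _ _ G']], simp_all add: mult.commute)
qed

lemma tau_rel_serre_mn2:
  assumes "m * n = 2" and A: "sA s N i i \<noteq> 0" and G: "G = qE s N \<or> G = qF s N"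
  shows "fext (tau N) (serre_rel_mn2 s N q G i c a1 a2 b1 b2) \<in> dual_ideal m n d q"
proof -
  obtain \<sigma> G' where G': "G' = qE (sneg s) N \<or> G' = qF (sneg s) N"
    and h: "\<And>i a. reflects N \<sigma> (G i a) (G' (- i) a)"
    using reflects_series[OF G] by metis
  define i' where "i' = - i"
  have hm: "reflects N \<sigma> (G (i - 1) x) (G' (i' + 1) x)"
    and hp: "reflects N \<sigma> (G (i + 1) x) (G' (i' - 1) x)"
    and h0: "reflects N \<sigma> (G i x) (G' i' x)" for x
    using h[of "i - 1" x] h[of "i + 1" x] h[of i x] by (simp_all add: i'_def)
  note br = reflects_qbr[where q = q]
  let ?b = "qbr (sneg s) N (inverse q)"
  let ?\<sigma> = "\<sigma> * (\<sigma> * (\<sigma> * (\<sigma> * \<sigma>)))"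
  have r1: "reflects N ?\<sigma> (qbr s N q (G (i - 1) x1) (qbr s N q (G (i + 1) y1)
        (qbr s N q (G (i - 1) x2) (qbr s N q (G (i + 1) y2) (G i c)))))
      (?b (G' (i' + 1) x1)
          (?b (G' (i' - 1) y1) (?b (G' (i' + 1) x2) (?b (G' (i' - 1) y2) (G' i' c)))))"
    and r2: "reflects N ?\<sigma> (qbr s N q (G (i + 1) y1) (qbr s N q (G (i - 1) x1)
        (qbr s N q (G (i + 1) y2) (qbr s N q (G (i - 1) x2) (G i c)))))
      (?b (G' (i' - 1) y1)
          (?b (G' (i' + 1) x1) (?b (G' (i' - 1) y2) (?b (G' (i' + 1) x2) (G' i' c)))))"
    for x1 x2 y1 y2
    by (rule br[OF hm br[OF hp br[OF hm br[OF hp h0]]]],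
        rule br[OF hp br[OF hm br[OF hp br[OF hm h0]]]])
  note img = reflects_fext_tau[OF r1] reflects_fext_tau[OF r2]
  have fin: "finite (fsupp (fst (qbr s N q (G (i - 1) x1) (qbr s N q (G (i + 1) y1)
        (qbr s N q (G (i - 1) x2) (qbr s N q (G (i + 1) y2) (G i c)))))))"
    "finite (fsupp (fst (qbr s N q (G (i + 1) y1) (qbr s N q (G (i - 1) x1)
        (qbr s N q (G (i + 1) y2) (qbr s N q (G (i - 1) x2) (G i c)))))))" for x1 x2 y1 y2
    using r1 r2 by (simp_all add: reflects_def)
  have "fext (tau N) (serre_rel_mn2 s N q G i c a1 a2 b1 b2)
    = fsmul (- ?\<sigma>) (serre_rel_mn2 (sneg s) N (inverse q) G' i' c b1 b2 a1 a2)"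
    unfolding serre_rel_mn2_def
    \<comment> \<open>the simplifier turns \<open>i + 1\<close> into \<open>1 + i\<close> before \<open>img\<close> can be used\<close>
    by (simp add: fext_fsub fext_fsuml fin)
      (rule ext, simp add: fa_apply algebra_simps img[unfolded add.commute[of _ 1]])
  moreover have "sA (sneg s) N i' i' \<noteq> 0" using A by (simp add: i'_def sA_sneg)
  ultimately show ?thesis
    using assms(1) by (simp only:) (rule tsideal_fsmul_rel[OF
        parity_seq.rels_serre_mn2[OF parity_seq_sneg _ _ G']], simp_all add: mult.commute)
qed

text \<open>The hypothesis \<open>const\<close> rules out the one configuration in which \<open>tau_rel_serre_odd\<close> is not
  available: \<open>N = 3\<close> with \<open>A\<^sub>i\<^sub>i = 0\<close> and \<open>mn \<noteq> 2\<close>.\<close>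
lemma tau_rels:
  assumes "q \<noteq> 0" and const: "\<And>i. N = 3 \<Longrightarrow> m * n \<noteq> 2 \<Longrightarrow> s (i + 1) = s i"
    and r: "r \<in> rels s N m n d q"
  shows "fext (tau N) r \<in> dual_ideal m n d q"
proof -
  have N4: "4 \<le> N" if "m * n \<noteq> 2" "sA s N i i = 0" for i
  proof (rule ccontr)
    assume "\<not> 4 \<le> N"
    then have "s (i + 1) = s i" using const[of i] N_ge_3 that(1) by simp
    then show False using that(2) sign[of i] by (auto simp: sA_diag)
  qed
  show ?thesis
    using r[unfolded rels_def Let_def]
    apply (elim UnE CollectE exE conjE; simp only:)
                      apply (rule tau_rel_K_Kinv)
                     apply (rule tau_rel_Kinv_K)
                    apply (rule tau_rel_K_K)
                   apply (rule tau_rel_K_E)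
                  apply (rule tau_rel_K_F)
                 apply (rule tau_rel_Kplus_Kplus)
                apply (rule tau_rel_Kminus_Kminus)
               apply (rule tau_rel_Kminus_Kplus)
              apply (rule tau_rel_Kseries_E, assumption)
             apply (rule tau_rel_Kseries_F, assumption)
            apply (rule tau_rel_E_F; assumption)
           apply (rule tau_rel_E_E_comm, assumption)
          apply (rule tau_rel_F_F_comm, assumption)
         apply (rule tau_rel_E_E, assumption)
        apply (rule tau_rel_F_F, assumption)
       apply (rule tau_rel_serre; assumption)
      apply (rule tau_rel_serre_odd[OF N4 assms(1)]; assumption)
     apply (rule tau_rel_serre_mn2[unfolded serre_rel_mn2_def]; assumption)
    done
qed

lemma tau_tsideal:
  assumes "q \<noteq> 0" and const: "\<And>i. N = 3 \<Longrightarrow> m * n \<noteq> 2 \<Longrightarrow> s (i + 1) = s i"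
    and "x \<in> tsideal N (rels s N m n d q)"
  shows "fext (tau N) x \<in> dual_ideal m n d q"
  using assms(3)
proof (induction rule: tsideal.induct)
  case zero then show ?case by (simp add: tsideal.zero)
next
  case (add x y)
  then have "finite (fsupp x)" "finite (fsupp y)"
    using tsideal_finite_fsupp finite_fsupp_rels by blast+
  then show ?case using add.IH by (simp add: fext_fadd tsideal.add)
next
  case (gen r a b)
  then have "finite (fsupp r)" "finite (fsupp a)" "finite (fsupp b)"
    using finite_fsupp_rels fpoly_finite_fsupp by blast+
  then have "fext (tau N) (fmul a (fmul r b)) = fmul (fext (tau N) a)
      (fmul (fext (tau N) r) (fext (tau N) b))"
    by (simp add: fext_fmul)
  moreover have "fext (tau N) r \<in> dual_ideal m n d q"
    using tau_rels[OF assms(1) const gen.hyps(1)] .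
  moreover have "fpoly N (fext (tau N) a)" "fpoly N (fext (tau N) b)"
    using gen.hyps(2,3) fpoly_fext fpoly_tau[OF N_pos] by blast+
  ultimately show ?case by (simp add: tsideal_fmul)
qed

lemma tau_tsideal_dual:
  assumes "q \<noteq> 0" and const: "\<And>i. N = 3 \<Longrightarrow> m * n \<noteq> 2 \<Longrightarrow> s (i + 1) = s i"
    and "x \<in> dual_ideal m n d q"
  shows "fext (tau N) x \<in> tsideal N (rels s N m n d q)"
proof -
  have "sneg s (i + 1) = sneg s i" if "N = 3" "n * m \<noteq> 2" for i
    using const[of "- i"] that by (simp add: sneg_def mult.commute)
  then show ?thesis
    using parity_seq.tau_tsideal[OF parity_seq_sneg, of "inverse q" n m] assms(1,3) by simp
qed

end

lemma sum_eq_3_prod_neq_2: "m + n = (3::nat) \<Longrightarrow> m * n \<noteq> 2 \<Longrightarrow> m = 0 \<or> m = 3"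
proof -
  assume "m + n = 3" "m * n \<noteq> 2"
  moreover have "m = 0 \<or> m = 1 \<or> m = 2 \<or> m = 3" using \<open>m + n = 3\<close> by auto
  ultimately show ?thesis by auto
qed

theorem lemma2p1:
  fixes m n :: nat and s :: "int \<Rightarrow> int" and d q :: complex
  assumes "m \<noteq> n" and "m + n \<ge> 3"
    and "\<forall>i. s i = 1 \<or> s i = -1"
    and "\<forall>i. s (i + int (m + n)) = s i"
    and "card {i \<in> {1..int (m + n)}. s i = 1} = m"
    and "d \<noteq> 0" and "q \<noteq> 0"
    and "\<forall>a b c :: int. (d / q) powi a * (q ^ 2) powi b * (1 / (d * q)) powi c = 1
            \<longrightarrow> a = b \<and> b = c"
  shows "let N = m + n;
             s' = (\<lambda>i. - s (1 - i));
             I = tsideal N (rels s N m n d q);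
             I' = tsideal N (rels s' N n m d (inverse q))
         in \<exists>f :: gen \<Rightarrow> fa.
              (\<forall>g. valid_gen N g \<longrightarrow> fpoly N (f g) \<and>
                   (\<exists>y. fpoly N y \<and> homog s' (gpar s g) y \<and> fsub (f g) y \<in> I'))
            \<and> (\<forall>x \<in> I. fext f x \<in> I')
            \<and> (\<forall>x. fpoly N x \<longrightarrow> fext f x \<in> I' \<longrightarrow> x \<in> I)
            \<and> (\<forall>y. fpoly N y \<longrightarrow> (\<exists>x. fpoly N x \<and> fsub (fext f x) y \<in> I'))
            \<and> (\<forall>i \<in> {0..<int N}. \<forall>k :: int.
                  fsub (fext f (Ec N i k)) (Ec N (- i) k) \<in> I'
                \<and> fadd (fext f (Fc N i k)) (Fc N (- i) k) \<in> I'
                \<and> fsub (fext f (Kplus q N i k)) (Kplus (inverse q) N (- i) k) \<in> I'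
                \<and> fsub (fext f (Kminus q N i k)) (Kminus (inverse q) N (- i) k) \<in> I')"
proof -
  define N where "N = m + n"
  interpret parity_seq s N
    using assms(2-4) by unfold_locales (simp_all add: N_def)
  have const: "s (i + 1) = s i" if "N = 3" "m * n \<noteq> 2" for i
    using constant_if_card[OF that(1)] sum_eq_3_prod_neq_2[of m n] that assms(5) by
        (auto simp: N_def)
  note fwd = tau_tsideal[OF assms(7) const] and bwd = tau_tsideal_dual[OF assms(7) const]
  show ?thesis
    unfolding Let_def sneg_def[symmetric] N_def[symmetric]
  proof (intro exI[of _ "tau N"] conjI allI impI ballI)
    fix g assume g: "valid_gen N g"
    show "fpoly N (tau N g)" by (rule fpoly_tau[OF N_pos g])
    show "\<exists>y. fpoly N y \<and> homog (sneg s) (gpar s g) y \<and> fsub (tau N g) y \<in> dual_ideal m n d q"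
      using fpoly_tau[OF N_pos g] homog_tau[OF parity_seq_axioms] tsideal.zero by
          (auto simp: fsub_self)
  next
    fix x assume "fpoly N x" "fext (tau N) x \<in> dual_ideal m n d q"
    then show "x \<in> tsideal N (rels s N m n d q)"
      using bwd[where x = "fext (tau N) x"] fext_tau_tau[OF N_pos] by simp
  next
    fix y assume "fpoly N y"
    then show "\<exists>x. fpoly N x \<and> fsub (fext (tau N) x) y \<in> dual_ideal m n d q"
      using fpoly_fext[OF fpoly_tau[OF N_pos]] fext_tau_tau[OF N_pos]
      by (intro exI[of _ "fext (tau N) y"]) (simp add: fsub_self tsideal.zero)
  qed (simp_all add: fwd fext_tau_Ec fext_tau_Fc fext_tau_Kplus fext_tau_Kminus fsub_self
      fadd_fsmul_neg_self tsideal.zero)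
qed

end
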